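(* The set of extreme points of the convex set $\hat{\mathcal S}(\mathcal H\otimes\mathcal J)$ of cross states equals the set of pure cross states, i.e. $\operatorname{ext}(\hat{\mathcal S}(\mathcal H\otimes\mathcal J))=\mathcal P(\mathcal H\otimes\mathcal J)\cap\hat{\mathcal S}(\mathcal H\otimes\mathcal J)$.
   Context: $\mathcal H,\mathcal J$ separable complex Hilbert spaces; $\mathcal P(\cdot)$ rank-one orthogonal projections; trace norm $\|\cdot\|_1$. $\hat{\mathcal S}(\mathcal H\otimes\mathcal J)$ is the set of density operators $D$ on $\mathcal H\otimes\mathcal J$ admitting an expansion $D=\sum_kr_kX_k\otimes Y_k$ (trace-norm convergent) with $r_k\ge0$, $\sum r_k<\infty$, $X_k,Y_k$ trace class, $\|X_k\|_1\|Y_k\|_1=1$; it is a convex set. *)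

theory Defs
  imports "HOL-Analysis.Analysis"
begin

text \<open>Concrete model: a separable complex Hilbert space is represented as
  l2(A) for a countable index type A; vectors are functions A => complex with
  square-summable modulus; bounded operators are represented by their matrices
  M x y = <delta_x, T delta_y>; H (x) J is l2(A x B).\<close>

definition is_ell2 :: "('a \<Rightarrow> complex) \<Rightarrow> bool" where
  "is_ell2 f \<longleftrightarrow> (\<lambda>x. (cmod (f x))\<^sup>2) summable_on UNIV"

definition ell2_norm :: "('a \<Rightarrow> complex) \<Rightarrow> real" where
  "ell2_norm f = sqrt (\<Sum>\<^sub>\<infinity>x. (cmod (f x))\<^sup>2)"

definition cinner :: "('a \<Rightarrow> complex) \<Rightarrow> ('a \<Rightarrow> complex) \<Rightarrow> complex" where
  "cinner f g = (\<Sum>\<^sub>\<infinity>x. cnj (f x) * g x)"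

definition mat_apply :: "('a \<Rightarrow> 'a \<Rightarrow> complex) \<Rightarrow> ('a \<Rightarrow> complex) \<Rightarrow> ('a \<Rightarrow> complex)" where
  "mat_apply M f = (\<lambda>x. \<Sum>\<^sub>\<infinity>y. M x y * f y)"

definition bounded_mat :: "('a \<Rightarrow> 'a \<Rightarrow> complex) \<Rightarrow> bool" where
  "bounded_mat M \<longleftrightarrow> (\<forall>x. is_ell2 (\<lambda>y. M x y)) \<and>
     (\<exists>C. \<forall>f. is_ell2 f \<longrightarrow> is_ell2 (mat_apply M f) \<and>
                ell2_norm (mat_apply M f) \<le> C * ell2_norm f)"

definition orthonormal_fam :: "nat \<Rightarrow> (nat \<Rightarrow> 'a \<Rightarrow> complex) \<Rightarrow> bool" where
  "orthonormal_fam n e \<longleftrightarrow> (\<forall>i<n. is_ell2 (e i)) \<and>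
     (\<forall>i<n. \<forall>j<n. cinner (e i) (e j) = (if i = j then 1 else 0))"

definition trace_norm_set :: "('a \<Rightarrow> 'a \<Rightarrow> complex) \<Rightarrow> real set" where
  "trace_norm_set M = {(\<Sum>i<n. cmod (cinner (f i) (mat_apply M (e i)))) | n e f.
      orthonormal_fam n e \<and> orthonormal_fam n f}"

definition trace_class :: "('a \<Rightarrow> 'a \<Rightarrow> complex) \<Rightarrow> bool" where
  "trace_class M \<longleftrightarrow> bounded_mat M \<and> bdd_above (trace_norm_set M)"

definition trace_norm :: "('a \<Rightarrow> 'a \<Rightarrow> complex) \<Rightarrow> real" where
  "trace_norm M = Sup (trace_norm_set M)"

definition trace :: "('a \<Rightarrow> 'a \<Rightarrow> complex) \<Rightarrow> complex" where
  "trace M = (\<Sum>\<^sub>\<infinity>x. M x x)"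

definition density_op :: "('a \<Rightarrow> 'a \<Rightarrow> complex) \<Rightarrow> bool" where
  "density_op D \<longleftrightarrow> trace_class D \<and>
     (\<forall>f. is_ell2 f \<longrightarrow> Im (cinner f (mat_apply D f)) = 0 \<and> Re (cinner f (mat_apply D f)) \<ge> 0) \<and>
     trace D = 1"

definition tensor_op :: "('a \<Rightarrow> 'a \<Rightarrow> complex) \<Rightarrow> ('b \<Rightarrow> 'b \<Rightarrow> complex) \<Rightarrow>
    ('a \<times> 'b \<Rightarrow> 'a \<times> 'b \<Rightarrow> complex)" where
  "tensor_op X Y = (\<lambda>(a, b) (a', b'). X a a' * Y b b')"

text \<open>Cross states: density operators D = sum_k r_k X_k (x) Y_k (trace-norm
  convergent), r_k \<ge> 0, sum r_k < infinity, ||X_k||_1 ||Y_k||_1 = 1. A countable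
  (possibly finite) expansion is indexed by nat (finite ones padded with r_k = 0).\<close>
definition cross_states :: "('a \<times> 'b \<Rightarrow> 'a \<times> 'b \<Rightarrow> complex) set" where
  "cross_states = {D. density_op D \<and>
     (\<exists>(r :: nat \<Rightarrow> real) (X :: nat \<Rightarrow> 'a \<Rightarrow> 'a \<Rightarrow> complex) (Y :: nat \<Rightarrow> 'b \<Rightarrow> 'b \<Rightarrow> complex).
        (\<forall>k. r k \<ge> 0) \<and> summable r \<and>
        (\<forall>k. trace_class (X k) \<and> trace_class (Y k) \<and> trace_norm (X k) * trace_norm (Y k) = 1) \<and>
        (\<lambda>n. trace_norm (\<lambda>u v. D u v - (\<Sum>k<n. complex_of_real (r k) * tensor_op (X k) (Y k) u v)))
          \<longlonglongrightarrow> 0)}"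

definition rank_one_projs :: "('a \<Rightarrow> 'a \<Rightarrow> complex) set" where
  "rank_one_projs = {P. \<exists>\<psi>. is_ell2 \<psi> \<and> ell2_norm \<psi> = 1 \<and> P = (\<lambda>x y. \<psi> x * cnj (\<psi> y))}"

definition ext_points :: "('a \<Rightarrow> 'a \<Rightarrow> complex) set \<Rightarrow> ('a \<Rightarrow> 'a \<Rightarrow> complex) set" where
  "ext_points S = {D \<in> S. \<forall>D1\<in>S. \<forall>D2\<in>S. \<forall>t::real. 0 < t \<and> t < 1 \<and>
       D = (\<lambda>x y. complex_of_real t * D1 x y + complex_of_real (1 - t) * D2 x y)
       \<longrightarrow> D1 = D \<and> D2 = D}"

end

theory Submission
  imports Defs
begin

text \<open>A rank-one projection \<open>P\<^sub>\<psi> = t D\<^sub>1 + (1 - t) D\<^sub>2\<close> forces the positive \<open>D\<^sub>1\<close> to vanish on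
  \<open>\<psi>\<^sup>\<bottom>\<close>, so \<open>D\<^sub>1 = P\<^sub>\<psi>\<close>: pure cross states are extreme.  Conversely, let the cross state \<open>D\<close> not
  be pure.  Pick \<open>z\<close> with \<open>D z z > 0\<close> and put \<open>\<phi> = D e\<^sub>z\<close>.  By Cauchy-Schwarz for the form of
  \<open>D\<close>, \<open>D - \<phi> \<phi>\<^sup>* / D z z\<close> is positive, so \<open>D = \<lambda> P\<^sub>u + (1 - \<lambda>) D\<^sub>2\<close> with \<open>u = \<phi> / \<parallel>\<phi>\<parallel>\<close>,
  \<open>0 < \<lambda> < 1\<close> and \<open>D\<^sub>2\<close> a density operator.  Both parts are cross states.  If
  \<open>D = \<Sum>\<^sub>k r\<^sub>k X\<^sub>k \<otimes> Y\<^sub>k\<close>, then \<open>\<phi> = \<Sum>\<^sub>k r\<^sub>k (X\<^sub>k e\<^sub>a) \<otimes> (Y\<^sub>k e\<^sub>b)\<close> for \<open>z = (a, b)\<close>, so \<open>P\<^sub>u\<close>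
  expands over pairs \<open>(k, l)\<close> into tensor products of rank-one matrices; and
  \<open>D\<^sub>2 = (D - \<lambda> P\<^sub>u) / (1 - \<lambda>)\<close> is expanded by interleaving the two series.  Hence \<open>D\<close> is not
  extreme.\<close>

section \<open>The sequence space \<open>\<ell>\<^sup>2\<close>\<close>

definition ell2_sqnorm :: "('a \<Rightarrow> complex) \<Rightarrow> real" where
  "ell2_sqnorm f = (\<Sum>\<^sub>\<infinity>x. (cmod (f x))\<^sup>2)"

definition basis_vec :: "'a \<Rightarrow> 'a \<Rightarrow> complex" where
  "basis_vec a = (\<lambda>x. if x = a then 1 else 0)"

lemma ell2_norm_eq_sqrt: "ell2_norm f = sqrt (ell2_sqnorm f)"
  by (simp add: ell2_norm_def ell2_sqnorm_def)

lemma ell2_sqnorm_nonneg: "ell2_sqnorm f \<ge> 0"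
  unfolding ell2_sqnorm_def by (simp add: infsum_nonneg)

lemma ell2_norm_nonneg: "ell2_norm f \<ge> 0"
  by (simp add: ell2_norm_eq_sqrt ell2_sqnorm_nonneg)

lemma ell2_norm_power2: "(ell2_norm f)\<^sup>2 = ell2_sqnorm f"
  by (simp add: ell2_norm_eq_sqrt ell2_sqnorm_nonneg)

lemma ell2_sqnorm_scale: "ell2_sqnorm (\<lambda>x. c * f x) = (cmod c)\<^sup>2 * ell2_sqnorm f"
  unfolding ell2_sqnorm_def by (simp add: norm_mult power_mult_distrib infsum_cmult_right')

lemma ell2_norm_scale: "ell2_norm (\<lambda>x. c * f x) = cmod c * ell2_norm f"
  by (simp add: ell2_norm_eq_sqrt ell2_sqnorm_scale real_sqrt_mult)

lemma ell2_norm_cnj: "ell2_norm (\<lambda>y. cnj (f y)) = ell2_norm f"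
  by (simp add: ell2_norm_def)

lemma cmod_mult_le_mean_sq: "cmod a * cmod b \<le> ((cmod a)\<^sup>2 + (cmod b)\<^sup>2) / 2"
proof -
  have "0 \<le> (cmod a - cmod b)\<^sup>2" by simp
  then show ?thesis by (simp add: power2_eq_square algebra_simps)
qed

lemma ell2_cmod_mult_summable:
  assumes "is_ell2 f" "is_ell2 g"
  shows "(\<lambda>x. cmod (f x) * cmod (g x)) summable_on UNIV"
proof -
  have "(\<lambda>x. ((cmod (f x))\<^sup>2 + (cmod (g x))\<^sup>2) * (1/2)) summable_on UNIV"
    using assms unfolding is_ell2_def by (intro summable_on_add summable_on_cmult_left) auto
  then show ?thesis
    by (rule summable_on_comparison_test) (use cmod_mult_le_mean_sq in auto)
qed

lemma ell2_mult_summable: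
  assumes "is_ell2 f" "is_ell2 g"
  shows "(\<lambda>x. f x * g x) summable_on UNIV"
proof -
  have "(\<lambda>x. norm (f x * g x)) summable_on UNIV"
    using ell2_cmod_mult_summable[OF assms] by (simp add: norm_mult)
  then show ?thesis using summable_on_iff_abs_summable_on_complex by blast
qed

lemma is_ell2_cnj: "is_ell2 f \<Longrightarrow> is_ell2 (\<lambda>x. cnj (f x))"
  by (simp add: is_ell2_def)

lemma ell2_cnj_mult_summable:
  assumes "is_ell2 f" "is_ell2 g"
  shows "(\<lambda>x. cnj (f x) * g x) summable_on UNIV"
  by (rule ell2_mult_summable[OF is_ell2_cnj[OF assms(1)] assms(2)])

lemma is_ell2_scale: "is_ell2 f \<Longrightarrow> is_ell2 (\<lambda>x. c * f x)"
  unfolding is_ell2_def by (simp add: norm_mult power_mult_distrib summable_on_cmult_right)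

lemma is_ell2_add:
  assumes "is_ell2 f" "is_ell2 g" shows "is_ell2 (\<lambda>x. f x + g x)"
proof -
  have bound: "(cmod (a + b))\<^sup>2 \<le> 2 * (cmod a)\<^sup>2 + 2 * (cmod b)\<^sup>2" for a b :: complex
  proof -
    have "(cmod (a + b))\<^sup>2 \<le> (cmod a + cmod b)\<^sup>2"
      by (simp add: norm_triangle_ineq power_mono)
    also have "\<dots> \<le> 2 * (cmod a)\<^sup>2 + 2 * (cmod b)\<^sup>2"
      using cmod_mult_le_mean_sq[of a b] by (simp add: power2_eq_square algebra_simps)
    finally show ?thesis .
  qed
  have "(\<lambda>x. 2 * (cmod (f x))\<^sup>2 + 2 * (cmod (g x))\<^sup>2) summable_on UNIV"
    using assms unfolding is_ell2_def by (intro summable_on_add summable_on_cmult_right) auto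
  then show ?thesis unfolding is_ell2_def
    by (rule summable_on_comparison_test) (use bound in auto)
qed

lemma is_ell2_diff:
  assumes "is_ell2 f" "is_ell2 g" shows "is_ell2 (\<lambda>x. f x - g x)"
  using is_ell2_add[OF assms(1) is_ell2_scale[OF assms(2), of "-1"]] by simp

lemma is_ell2_zero: "is_ell2 (\<lambda>x. 0)"
  by (simp add: is_ell2_def)

lemma is_ell2_finite_support:
  assumes "finite {x. f x \<noteq> 0}" shows "is_ell2 f"
  unfolding is_ell2_def
  by (rule finite_nonzero_values_imp_summable_on) (use assms in \<open>auto\<close>)

lemma is_ell2_basis_vec: "is_ell2 (basis_vec a)"
  by (rule is_ell2_finite_support) (auto simp: basis_vec_def)

lemma is_ell2_sum:
  assumes "\<And>i. i \<in> I \<Longrightarrow> is_ell2 (f i)"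
  shows "is_ell2 (\<lambda>x. \<Sum>i\<in>I. f i x)"
  using assms
  by (induction I rule: infinite_finite_induct) (simp_all add: is_ell2_zero is_ell2_add)

lemma cmod_le_ell2_norm:
  assumes "is_ell2 f" shows "cmod (f x) \<le> ell2_norm f"
proof -
  have "(\<Sum>y\<in>{x}. (cmod (f y))\<^sup>2) \<le> (\<Sum>\<^sub>\<infinity>y. (cmod (f y))\<^sup>2)"
    by (rule finite_sum_le_infsum) (use assms in \<open>auto simp: is_ell2_def\<close>)
  then have "(cmod (f x))\<^sup>2 \<le> ell2_sqnorm f" by (simp add: ell2_sqnorm_def)
  then show ?thesis unfolding ell2_norm_eq_sqrt by (simp add: real_le_rsqrt)
qed

lemma ell2_sqnorm_eq_0_imp:
  assumes "is_ell2 g" "ell2_sqnorm g = 0" shows "g x = 0"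
  using cmod_le_ell2_norm[OF assms(1), of x] assms(2) by (simp add: ell2_norm_eq_sqrt)

lemma ell2_norm_eq_0_imp: "is_ell2 x \<Longrightarrow> ell2_norm x = 0 \<Longrightarrow> x s = 0"
  using cmod_le_ell2_norm[of x s] by simp

lemma infsum_sum_swap:
  fixes f :: "'i \<Rightarrow> 'a \<Rightarrow> 'b::{topological_comm_monoid_add, t2_space}"
  assumes "\<And>i. i \<in> I \<Longrightarrow> f i summable_on A"
  shows "(\<Sum>\<^sub>\<infinity>x\<in>A. \<Sum>i\<in>I. f i x) = (\<Sum>i\<in>I. \<Sum>\<^sub>\<infinity>x\<in>A. f i x)"
    and "(\<lambda>x. \<Sum>i\<in>I. f i x) summable_on A"
  using assms
proof (induction I rule: infinite_finite_induct)
  case (insert i F)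
  { case 1 then show ?case using insert by (simp add: infsum_add summable_on_add) }
  { case 2 then show ?case using insert by (simp add: summable_on_add) }
qed simp_all

lemma cinner_add_right:
  assumes "is_ell2 f" "is_ell2 g" "is_ell2 h"
  shows "cinner f (\<lambda>x. g x + h x) = cinner f g + cinner f h"
  unfolding cinner_def
  using infsum_add[OF ell2_cnj_mult_summable[OF assms(1,2)] ell2_cnj_mult_summable[OF assms(1,3)]]
  by (simp add: distrib_left)

lemma cinner_add_left:
  assumes "is_ell2 f" "is_ell2 g" "is_ell2 h"
  shows "cinner (\<lambda>x. g x + h x) f = cinner g f + cinner h f"
  unfolding cinner_def
  using infsum_add[OF ell2_cnj_mult_summable[OF assms(2,1)] ell2_cnj_mult_summable[OF assms(3,1)]]
  by (simp add: distrib_right)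

lemma cinner_scale_right: "cinner f (\<lambda>x. c * g x) = c * cinner f g"
  unfolding cinner_def
  using infsum_cmult_right'[of c "\<lambda>x. cnj (f x) * g x" UNIV]
  by (simp add: algebra_simps)

lemma cinner_scale_left: "cinner (\<lambda>x. c * f x) g = cnj c * cinner f g"
  unfolding cinner_def
  using infsum_cmult_right'[of "cnj c" "\<lambda>x. cnj (f x) * g x" UNIV]
  by (simp add: algebra_simps)

lemma cinner_diff_right:
  assumes "is_ell2 f" "is_ell2 g" "is_ell2 h"
  shows "cinner f (\<lambda>x. g x - h x) = cinner f g - cinner f h"
  using cinner_add_right[OF assms(1,2) is_ell2_scale[OF assms(3), of "-1"]]
        cinner_scale_right[of f "-1" h] by simp

lemma cinner_diff_left:
  assumes "is_ell2 f" "is_ell2 g" "is_ell2 h"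
  shows "cinner (\<lambda>x. g x - h x) f = cinner g f - cinner h f"
  using cinner_add_left[OF assms(1,2) is_ell2_scale[OF assms(3), of "-1"]]
        cinner_scale_left[of "-1" h f] by simp

lemma cinner_zero_right: "cinner f (\<lambda>x. 0) = 0"
  by (simp add: cinner_def)

lemma cinner_commute: "cinner g f = cnj (cinner f g)"
proof -
  have "cnj (cinner f g) = (\<Sum>\<^sub>\<infinity>x. cnj (cnj (f x) * g x))"
    unfolding cinner_def by (simp only: infsum_cnj)
  then show ?thesis unfolding cinner_def by (simp add: mult.commute)
qed

lemma cinner_self: "cinner f f = of_real (ell2_sqnorm f)"
proof -
  have "cinner f f = (\<Sum>\<^sub>\<infinity>x. of_real ((cmod (f x))\<^sup>2))"
    unfolding cinner_def
    by (rule infsum_cong) (simp add: complex_norm_square mult.commute del: of_real_power)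
  also have "\<dots> = of_real (ell2_sqnorm f)"
  proof (cases "(\<lambda>x. (cmod (f x))\<^sup>2) summable_on UNIV")
    case True
    then have "((\<lambda>x. complex_of_real ((cmod (f x))\<^sup>2)) has_sum complex_of_real (ell2_sqnorm f)) UNIV"
      unfolding ell2_sqnorm_def by (intro has_sum_of_real) simp
    then show ?thesis by (rule infsumI)
  next
    case False
    then have "\<not> (\<lambda>x. complex_of_real ((cmod (f x))\<^sup>2)) summable_on UNIV"
      using summable_on_Re[of "\<lambda>x. complex_of_real ((cmod (f x))\<^sup>2)" UNIV] by auto
    then show ?thesis using False by (simp add: infsum_not_exists ell2_sqnorm_def)
  qed
  finally show ?thesis .
qed

lemma cinner_diff_scale_self:
  assumes f: "is_ell2 f" and g: "is_ell2 g"
  shows "cinner (\<lambda>x. f x - t * g x) (\<lambda>x. f x - t * g x)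
     = cinner f f - t * cinner f g - cnj t * cinner g f + t * cnj t * cinner g g"
proof -
  have tg: "is_ell2 (\<lambda>x. t * g x)" by (rule is_ell2_scale[OF g])
  have h: "is_ell2 (\<lambda>x. f x - t * g x)" by (rule is_ell2_diff[OF f tg])
  have "cinner (\<lambda>x. f x - t * g x) (\<lambda>x. f x - t * g x)
      = cinner f (\<lambda>x. f x - t * g x) - cinner (\<lambda>x. t * g x) (\<lambda>x. f x - t * g x)"
    by (rule cinner_diff_left[OF h f tg])
  also have "\<dots> = (cinner f f - t * cinner f g) - cnj t * (cinner g f - t * cinner g g)"
    by (simp add: cinner_diff_right[OF f f tg] cinner_diff_right[OF g f tg]
          cinner_scale_left cinner_scale_right)
  finally show ?thesis by (simp add: algebra_simps)
qed

lemma cinner_cauchy_schwarz_sq: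
  assumes f: "is_ell2 f" and g: "is_ell2 g"
  shows "(cmod (cinner f g))\<^sup>2 \<le> ell2_sqnorm f * ell2_sqnorm g"
proof (cases "ell2_sqnorm g = 0")
  case True
  then have "g = (\<lambda>x. 0)" using ell2_sqnorm_eq_0_imp[OF g] by auto
  then show ?thesis by (simp add: cinner_zero_right ell2_sqnorm_def)
next
  case False
  then have b: "ell2_sqnorm g > 0" using ell2_sqnorm_nonneg[of g] by auto
  define c where "c = cinner g f"
  define t where "t = c / of_real (ell2_sqnorm g)"
  have e: "cinner (\<lambda>x. f x - t * g x) (\<lambda>x. f x - t * g x)
     = cinner f f - t * cinner f g - cnj t * cinner g f + t * cnj t * cinner g g"
    by (rule cinner_diff_scale_self[OF f g])
  have cfg: "cinner f g = cnj c" unfolding c_def using cinner_commute by metis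
  have cgf: "cinner g f = c" unfolding c_def by simp
  have N: "complex_of_real (ell2_sqnorm g) \<noteq> 0" using b by simp
  have "complex_of_real (ell2_sqnorm (\<lambda>x. f x - t * g x))
     = of_real (ell2_sqnorm f) - t * cnj c - cnj t * c + t * cnj t * of_real (ell2_sqnorm g)"
    using e by (simp add: cinner_self cfg cgf)
  also have "\<dots> = of_real (ell2_sqnorm f) - c * cnj c / of_real (ell2_sqnorm g)"
    using N unfolding t_def by (simp add: field_simps)
  also have "\<dots> = of_real (ell2_sqnorm f - (cmod c)\<^sup>2 / ell2_sqnorm g)"
    by (simp add: complex_norm_square[symmetric] del: of_real_power)
  finally have "ell2_sqnorm (\<lambda>x. f x - t * g x) = ell2_sqnorm f - (cmod c)\<^sup>2 / ell2_sqnorm g"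
    using of_real_eq_iff by blast
  then have "0 \<le> ell2_sqnorm f - (cmod c)\<^sup>2 / ell2_sqnorm g" using ell2_sqnorm_nonneg by metis
  then have "(cmod c)\<^sup>2 \<le> ell2_sqnorm f * ell2_sqnorm g" using b by (simp add: field_simps)
  moreover have "cmod (cinner f g) = cmod c" by (simp add: cfg)
  ultimately show ?thesis by simp
qed

lemma cinner_cauchy_schwarz:
  assumes f: "is_ell2 f" and g: "is_ell2 g"
  shows "cmod (cinner f g) \<le> ell2_norm f * ell2_norm g"
proof -
  have "(cmod (cinner f g))\<^sup>2 \<le> (ell2_norm f * ell2_norm g)\<^sup>2"
    using cinner_cauchy_schwarz_sq[OF assms] by (simp add: power_mult_distrib ell2_norm_power2)
  then show ?thesis
    using ell2_norm_nonneg[of f] ell2_norm_nonneg[of g]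
    by (meson mult_nonneg_nonneg power2_le_imp_le)
qed

lemma cinner_basis_vec_left: "cinner (basis_vec a) f = f a"
proof -
  have "cinner (basis_vec a) f = (\<Sum>\<^sub>\<infinity>x\<in>{a}. cnj (basis_vec a x) * f x)"
    unfolding cinner_def
    by (rule infsum_cong_neutral) (auto simp: basis_vec_def)
  then show ?thesis by (simp add: basis_vec_def)
qed

lemma cinner_basis_vec_right: "cinner f (basis_vec a) = cnj (f a)"
  by (subst cinner_commute) (simp add: cinner_basis_vec_left)

lemma ell2_sqnorm_basis_vec: "ell2_sqnorm (basis_vec a) = 1"
  using cinner_self[of "basis_vec a"] cinner_basis_vec_left[of a "basis_vec a"] by (simp add: basis_vec_def)

lemma cinner_sum_right:
  assumes "is_ell2 f" "\<And>i. i \<in> I \<Longrightarrow> is_ell2 (F i)"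
  shows "cinner f (\<lambda>x. \<Sum>i\<in>I. F i x) = (\<Sum>i\<in>I. cinner f (F i))"
proof -
  have "cinner f (\<lambda>x. \<Sum>i\<in>I. F i x) = (\<Sum>\<^sub>\<infinity>x. \<Sum>i\<in>I. cnj (f x) * F i x)"
    unfolding cinner_def by (simp add: sum_distrib_left)
  also have "\<dots> = (\<Sum>i\<in>I. \<Sum>\<^sub>\<infinity>x. cnj (f x) * F i x)"
    by (rule infsum_sum_swap(1)) (use assms ell2_cnj_mult_summable in auto)
  finally show ?thesis by (simp add: cinner_def)
qed

lemma cinner_sum_left:
  assumes "is_ell2 f" "\<And>i. i \<in> I \<Longrightarrow> is_ell2 (F i)"
  shows "cinner (\<lambda>x. \<Sum>i\<in>I. F i x) f = (\<Sum>i\<in>I. cinner (F i) f)"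
proof -
  have "cinner (\<lambda>x. \<Sum>i\<in>I. F i x) f = cnj (cinner f (\<lambda>x. \<Sum>i\<in>I. F i x))"
    by (rule cinner_commute)
  also have "\<dots> = (\<Sum>i\<in>I. cnj (cinner f (F i)))" using cinner_sum_right[of f I F] assms by simp
  also have "\<dots> = (\<Sum>i\<in>I. cinner (F i) f)" by (simp add: cinner_commute[of "F _" f])
  finally show ?thesis .
qed

lemma orthonormal_fam_norm:
  assumes "orthonormal_fam n e" "i < n"
  shows "is_ell2 (e i)" "ell2_sqnorm (e i) = 1" "ell2_norm (e i) = 1"
proof -
  show "is_ell2 (e i)" using assms by (simp add: orthonormal_fam_def)
  have "cinner (e i) (e i) = 1" using assms by (simp add: orthonormal_fam_def)
  then show "ell2_sqnorm (e i) = 1" by (simp add: cinner_self)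
  then show "ell2_norm (e i) = 1" by (simp add: ell2_norm_eq_sqrt)
qed

lemma orthonormal_fam_single:
  assumes "is_ell2 v" "ell2_sqnorm v = 1"
  shows "orthonormal_fam (Suc 0) (\<lambda>_. v)"
  using assms by (simp add: orthonormal_fam_def cinner_self)

lemma cinner_orthonormal_lincomb:
  assumes on: "orthonormal_fam n e" and j: "j < n"
  shows "cinner (e j) (\<lambda>x. \<Sum>i<n. c i * e i x) = c j"
proof -
  have "cinner (e j) (\<lambda>x. \<Sum>i<n. c i * e i x) = (\<Sum>i<n. cinner (e j) (\<lambda>x. c i * e i x))"
    by (rule cinner_sum_right) (use on j in \<open>auto simp: orthonormal_fam_def intro: is_ell2_scale\<close>)
  also have "\<dots> = (\<Sum>i<n. c i * (if j = i then 1 else 0))"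
    by (rule sum.cong) (use on j in \<open>auto simp: cinner_scale_right orthonormal_fam_def\<close>)
  also have "\<dots> = c j" using j by (simp add: if_distrib sum.If_cases)
  finally show ?thesis .
qed

lemma bessel_inequality:
  assumes on: "orthonormal_fam n e" and g: "is_ell2 g"
  shows "(\<Sum>i<n. (cmod (cinner (e i) g))\<^sup>2) \<le> ell2_sqnorm g"
proof -
  define c where "c i = cinner (e i) g" for i
  have ei: "is_ell2 (e i)" if "i < n" for i using on that by (simp add: orthonormal_fam_def)
  define s where "s = (\<lambda>x. \<Sum>i<n. c i * e i x)"
  have s2: "is_ell2 s" unfolding s_def by (rule is_ell2_sum) (use ei is_ell2_scale in auto)
  define h where "h = (\<lambda>x. g x - s x)"
  have h2: "is_ell2 h" unfolding h_def by (rule is_ell2_diff[OF g s2])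
  have ej_h: "cinner (e j) h = 0" if "j < n" for j
    using cinner_diff_right[OF ei[OF that] g s2] cinner_orthonormal_lincomb[OF on that]
    by (simp add: h_def s_def c_def)
  have s_h: "cinner s h = 0"
  proof -
    have "cinner s h = (\<Sum>i<n. cinner (\<lambda>x. c i * e i x) h)"
      unfolding s_def by (rule cinner_sum_left) (use ei h2 is_ell2_scale in auto)
    also have "\<dots> = 0" by (simp add: cinner_scale_left ej_h)
    finally show ?thesis .
  qed
  have "cinner h h = cinner g h"
    using cinner_diff_left[OF h2 g s2] s_h by (simp add: h_def)
  also have "\<dots> = cinner g g - cinner g s"
    unfolding h_def by (rule cinner_diff_right[OF g g s2])
  also have "cinner g s = (\<Sum>i<n. cinner g (\<lambda>x. c i * e i x))"
    unfolding s_def by (rule cinner_sum_right) (use ei g is_ell2_scale in auto)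
  also have "\<dots> = (\<Sum>i<n. of_real ((cmod (c i))\<^sup>2))"
    by (rule sum.cong) (auto simp: cinner_scale_right c_def cinner_commute[of g]
        complex_norm_square simp del: of_real_power)
  finally have "complex_of_real (ell2_sqnorm h) = of_real (ell2_sqnorm g - (\<Sum>i<n. (cmod (c i))\<^sup>2))"
    by (simp add: cinner_self)
  then have "ell2_sqnorm h = ell2_sqnorm g - (\<Sum>i<n. (cmod (c i))\<^sup>2)"
    using of_real_eq_iff by blast
  then show ?thesis using ell2_sqnorm_nonneg[of h] by (simp add: c_def)
qed

lemma sum_cinner_orthonormal_le:
  assumes e: "orthonormal_fam n e" and f: "orthonormal_fam n f" and p: "is_ell2 p" and q: "is_ell2 q"
  shows "(\<Sum>i<n. cmod (cinner q (e i)) * cmod (cinner (f i) p)) \<le> ell2_norm q * ell2_norm p"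
proof -
  have b1: "(\<Sum>i<n. (cmod (cinner q (e i)))\<^sup>2) \<le> ell2_sqnorm q"
    using bessel_inequality[OF e q] by (simp add: cinner_commute[of q])
  have b2: "(\<Sum>i<n. (cmod (cinner (f i) p))\<^sup>2) \<le> ell2_sqnorm p"
    using bessel_inequality[OF f p] by simp
  have "(\<Sum>i<n. cmod (cinner q (e i)) * cmod (cinner (f i) p))\<^sup>2
      \<le> (\<Sum>i<n. (cmod (cinner q (e i)))\<^sup>2) * (\<Sum>i<n. (cmod (cinner (f i) p))\<^sup>2)"
    by (rule Cauchy_Schwarz_ineq_sum)
  also have "\<dots> \<le> ell2_sqnorm q * ell2_sqnorm p"
    using b1 b2 by (intro mult_mono) (auto intro: sum_nonneg ell2_sqnorm_nonneg)
  also have "\<dots> = (ell2_norm q * ell2_norm p)\<^sup>2"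
    by (simp add: power_mult_distrib ell2_norm_power2)
  finally show ?thesis
    using ell2_norm_nonneg by (meson mult_nonneg_nonneg power2_le_imp_le)
qed

lemma ell2_normalize:
  assumes v: "is_ell2 v" and pos: "ell2_norm v > 0"
  shows "is_ell2 (\<lambda>x. complex_of_real (1 / ell2_norm v) * v x)"
    and "ell2_sqnorm (\<lambda>x. complex_of_real (1 / ell2_norm v) * v x) = 1"
    and "cinner (\<lambda>x. complex_of_real (1 / ell2_norm v) * v x) v = complex_of_real (ell2_norm v)"
proof -
  show "is_ell2 (\<lambda>x. complex_of_real (1 / ell2_norm v) * v x)" by (rule is_ell2_scale[OF v])
  have "ell2_sqnorm (\<lambda>x. complex_of_real (1 / ell2_norm v) * v x) = (1 / ell2_norm v)\<^sup>2 * (ell2_norm v)\<^sup>2"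
    unfolding ell2_sqnorm_scale ell2_norm_power2 norm_of_real using pos by simp
  then show "ell2_sqnorm (\<lambda>x. complex_of_real (1 / ell2_norm v) * v x) = 1"
    using pos by (simp add: power_divide)
  have "cinner (\<lambda>x. complex_of_real (1 / ell2_norm v) * v x) v
      = complex_of_real (1 / ell2_norm v * (ell2_norm v)\<^sup>2)"
    unfolding cinner_scale_left cinner_self ell2_norm_power2[symmetric] by simp
  then show "cinner (\<lambda>x. complex_of_real (1 / ell2_norm v) * v x) v = complex_of_real (ell2_norm v)"
    using pos by (simp add: power2_eq_square)
qed

lemma cinner_finite_support:
  assumes "finite F" "\<And>x. x \<notin> F \<Longrightarrow> f x = 0"
  shows "cinner f g = (\<Sum>x\<in>F. cnj (f x) * g x)"
proof -
  have "cinner f g = (\<Sum>\<^sub>\<infinity>x\<in>F. cnj (f x) * g x)"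
    unfolding cinner_def by (rule infsum_cong_neutral) (use assms in auto)
  then show ?thesis using assms by simp
qed

lemma infsum_cmod_mult_le:
  assumes f: "is_ell2 f" and g: "is_ell2 g"
  shows "(\<Sum>\<^sub>\<infinity>x. cmod (f x) * cmod (g x)) \<le> ell2_norm f * ell2_norm g"
proof -
  define F where "F x = complex_of_real (cmod (f x))" for x
  define G where "G x = complex_of_real (cmod (g x))" for x
  have F2: "is_ell2 F" and G2: "is_ell2 G" using f g by (simp_all add: F_def G_def is_ell2_def)
  have nF: "ell2_norm F = ell2_norm f" and nG: "ell2_norm G = ell2_norm g"
    by (simp_all add: F_def G_def ell2_norm_def)
  have s: "(\<lambda>x. cmod (f x) * cmod (g x)) summable_on UNIV" by (rule ell2_cmod_mult_summable[OF f g])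
  have "((\<lambda>x. complex_of_real (cmod (f x) * cmod (g x))) has_sum complex_of_real (\<Sum>\<^sub>\<infinity>x. cmod (f x) * cmod (g x))) UNIV"
    by (rule has_sum_of_real) (use s in simp)
  then have "cinner F G = complex_of_real (\<Sum>\<^sub>\<infinity>x. cmod (f x) * cmod (g x))"
    unfolding cinner_def F_def G_def by (simp add: infsumI)
  moreover have "(\<Sum>\<^sub>\<infinity>x. cmod (f x) * cmod (g x)) \<ge> 0" by (simp add: infsum_nonneg)
  ultimately have "cmod (cinner F G) = (\<Sum>\<^sub>\<infinity>x. cmod (f x) * cmod (g x))" by simp
  then show ?thesis using cinner_cauchy_schwarz[OF F2 G2] nF nG by simp
qed

lemma is_ell2_tensor:
  assumes f: "is_ell2 f" and g: "is_ell2 g"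
  shows "is_ell2 (\<lambda>(s, t). f s * g t)" and "ell2_sqnorm (\<lambda>(s, t). f s * g t) = ell2_sqnorm f * ell2_sqnorm g"
proof -
  define h where "h = (\<lambda>p. (cmod (f (fst p)))\<^sup>2 * (cmod (g (snd p)))\<^sup>2)"
  have hs: "h summable_on (Sigma UNIV (\<lambda>_. UNIV))"
  proof -
    have "(\<lambda>p. norm (h p)) summable_on (Sigma UNIV (\<lambda>_. UNIV))"
    proof (rule Infinite_Sum.abs_summable_on_Sigma_iff[THEN iffD2], intro conjI ballI)
      fix s :: 'a
      show "(\<lambda>t. norm (h (s, t))) summable_on UNIV"
        using g unfolding h_def is_ell2_def by (simp add: summable_on_cmult_right)
    next
      have "(\<lambda>s. (cmod (f s))\<^sup>2 * ell2_sqnorm g) summable_on UNIV"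
        using f unfolding is_ell2_def by (rule summable_on_cmult_left)
      moreover have "(\<Sum>\<^sub>\<infinity>t. norm (h (s, t))) = (cmod (f s))\<^sup>2 * ell2_sqnorm g" for s
        unfolding h_def ell2_sqnorm_def by (simp add: infsum_cmult_right')
      ultimately show "(\<lambda>s. norm (\<Sum>\<^sub>\<infinity>t\<in>UNIV. norm (h (s, t)))) summable_on UNIV"
        by (simp add: ell2_sqnorm_nonneg)
    qed
    then show ?thesis by (simp add: h_def)
  qed
  have eq: "(\<lambda>p. (cmod ((\<lambda>(s, t). f s * g t) p))\<^sup>2) = h"
    by (auto simp: h_def norm_mult power_mult_distrib)
  show "is_ell2 (\<lambda>(s, t). f s * g t)" unfolding is_ell2_def eq using hs by simp
  have "ell2_sqnorm (\<lambda>(s, t). f s * g t) = (\<Sum>\<^sub>\<infinity>p\<in>Sigma UNIV (\<lambda>_. UNIV). h p)"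
    unfolding ell2_sqnorm_def eq by simp
  also have "\<dots> = (\<Sum>\<^sub>\<infinity>s. \<Sum>\<^sub>\<infinity>t. h (s, t))"
    using infsum_Sigma'_banach[of "\<lambda>s t. h (s, t)" UNIV "\<lambda>_. UNIV"] hs by (simp add: case_prod_beta)
  also have "\<dots> = (\<Sum>\<^sub>\<infinity>s. (cmod (f s))\<^sup>2 * ell2_sqnorm g)"
    unfolding h_def ell2_sqnorm_def by (simp add: infsum_cmult_right')
  also have "\<dots> = ell2_sqnorm f * ell2_sqnorm g" unfolding ell2_sqnorm_def[of f] by (rule infsum_cmult_left')
  finally show "ell2_sqnorm (\<lambda>(s, t). f s * g t) = ell2_sqnorm f * ell2_sqnorm g" .
qed

lemma is_ell2_if_cinner_bounded:
  assumes B: "B \<ge> 0"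
    and bound: "\<And>g. finite {x. g x \<noteq> 0} \<Longrightarrow> cmod (cinner g h) \<le> B * ell2_norm g"
  shows "is_ell2 h" and "ell2_norm h \<le> B"
proof -
  have fin: "(\<Sum>x\<in>F. (cmod (h x))\<^sup>2) \<le> B\<^sup>2" if F: "finite F" for F
  proof -
    define S where "S = (\<Sum>x\<in>F. (cmod (h x))\<^sup>2)"
    define hF where "hF x = (if x \<in> F then h x else 0)" for x
    have S0: "S \<ge> 0" unfolding S_def by (simp add: sum_nonneg)
    have supp: "finite {x. hF x \<noteq> 0}" by (rule finite_subset[OF _ F]) (auto simp: hF_def)
    have "ell2_sqnorm hF = (\<Sum>\<^sub>\<infinity>x\<in>F. (cmod (hF x))\<^sup>2)"
      unfolding ell2_sqnorm_def by (rule infsum_cong_neutral) (auto simp: hF_def)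
    then have norm_hF: "ell2_norm hF = sqrt S" using F by (simp add: S_def hF_def ell2_norm_eq_sqrt)
    have "cinner hF h = (\<Sum>x\<in>F. cnj (hF x) * h x)"
      by (rule cinner_finite_support[OF F]) (simp add: hF_def)
    also have "\<dots> = (\<Sum>x\<in>F. of_real ((cmod (h x))\<^sup>2))"
      by (rule sum.cong) (auto simp: hF_def complex_norm_square mult.commute simp del: of_real_power)
    also have "\<dots> = of_real S" by (simp add: S_def)
    finally have "S \<le> B * sqrt S" using bound[OF supp] norm_hF S0 by simp
    then have le: "sqrt S * sqrt S \<le> B * sqrt S" using S0 by (simp only: real_sqrt_mult_self abs_of_nonneg)
    have "sqrt S \<le> B"
    proof (cases "S = 0")
      case False
      then have "sqrt S > 0" using S0 by simp
      then show ?thesis by (rule mult_right_le_imp_le[OF le])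
    qed (use B in simp)
    then have "(sqrt S)\<^sup>2 \<le> B\<^sup>2" using S0 by (intro power_mono) simp_all
    then show ?thesis using S0 by (simp add: S_def)
  qed
  show h2: "is_ell2 h" unfolding is_ell2_def
    by (rule nonneg_bdd_above_summable_on) (use fin in \<open>auto intro!: bdd_aboveI2\<close>)
  have "ell2_sqnorm h \<le> B\<^sup>2" unfolding ell2_sqnorm_def
    by (rule infsum_le_finite_sums) (use h2 fin in \<open>auto simp: is_ell2_def\<close>)
  then have "sqrt (ell2_sqnorm h) \<le> sqrt (B\<^sup>2)" by (rule real_sqrt_le_mono)
  then show "ell2_norm h \<le> B" using B by (simp add: ell2_norm_eq_sqrt)
qed

lemma ell2_family_summable_pointwise:
  assumes v: "\<And>j. j \<in> J \<Longrightarrow> is_ell2 (v j)" and s: "(\<lambda>j. ell2_norm (v j)) summable_on J"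
  shows "(\<lambda>j. v j x) summable_on J"
proof -
  have "(\<lambda>j. cmod (v j x)) summable_on J"
    by (rule summable_on_comparison_test[OF s]) (use v in \<open>auto intro: cmod_le_ell2_norm\<close>)
  then show ?thesis using summable_on_iff_abs_summable_on_complex by blast
qed

lemma ell2_family_cinner_summable:
  assumes v: "\<And>j. j \<in> J \<Longrightarrow> is_ell2 (v j)" and s: "(\<lambda>j. ell2_norm (v j)) summable_on J"
    and g: "is_ell2 g"
  shows "(\<lambda>(j, x). cnj (g x) * v j x) summable_on (J \<times> UNIV)"
proof -
  have a: "(\<lambda>p. cnj (g (snd p)) * v (fst p) (snd p)) summable_on (J \<times> UNIV)"
  proof -
    have "(\<lambda>p. norm (cnj (g (snd p)) * v (fst p) (snd p))) summable_on (Sigma J (\<lambda>_. UNIV))"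
    proof (rule Infinite_Sum.abs_summable_on_Sigma_iff[THEN iffD2], intro conjI ballI)
      fix j assume "j \<in> J"
      then show "(\<lambda>y. norm (cnj (g (snd (j, y))) * v (fst (j, y)) (snd (j, y)))) summable_on UNIV"
        using ell2_cmod_mult_summable[OF g v] by (simp add: norm_mult)
    next
      have b: "(\<Sum>\<^sub>\<infinity>y. norm (cnj (g y) * v j y)) \<le> ell2_norm g * ell2_norm (v j)" if "j \<in> J" for j
        using infsum_cmod_mult_le[OF g v[OF that]] by (simp add: norm_mult)
      have "(\<lambda>j. ell2_norm g * ell2_norm (v j)) summable_on J"
        by (rule summable_on_cmult_right[OF s])
      then have "(\<lambda>j. (\<Sum>\<^sub>\<infinity>y. norm (cnj (g y) * v j y))) summable_on J"
        by (rule summable_on_comparison_test) (use b in \<open>auto intro: infsum_nonneg\<close>)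
      then show "(\<lambda>x. norm (\<Sum>\<^sub>\<infinity>y\<in>UNIV. norm (cnj (g (snd (x, y))) * v (fst (x, y)) (snd (x, y))))) summable_on J"
        by (simp add: infsum_nonneg)
    qed
    then show ?thesis using summable_on_iff_abs_summable_on_complex by blast
  qed
  have eqf: "(\<lambda>(j, x). cnj (g x) * v j x) = (\<lambda>p. cnj (g (snd p)) * v (fst p) (snd p))"
    by (rule ext) (simp add: case_prod_beta)
  show ?thesis unfolding eqf by (rule a)
qed

lemma cinner_infsum_right:
  assumes v: "\<And>j. j \<in> J \<Longrightarrow> is_ell2 (v j)" and s: "(\<lambda>j. ell2_norm (v j)) summable_on J"
    and g: "is_ell2 g"
  shows "cinner g (\<lambda>x. \<Sum>\<^sub>\<infinity>j\<in>J. v j x) = (\<Sum>\<^sub>\<infinity>j\<in>J. cinner g (v j))"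
proof -
  have "(\<Sum>\<^sub>\<infinity>j\<in>J. \<Sum>\<^sub>\<infinity>x. cnj (g x) * v j x) = (\<Sum>\<^sub>\<infinity>x. \<Sum>\<^sub>\<infinity>j\<in>J. cnj (g x) * v j x)"
    by (rule infsum_swap_banach) (rule ell2_family_cinner_summable[OF v s g])
  also have "\<dots> = (\<Sum>\<^sub>\<infinity>x. cnj (g x) * (\<Sum>\<^sub>\<infinity>j\<in>J. v j x))"
    by (simp add: infsum_cmult_right')
  finally show ?thesis by (simp add: cinner_def)
qed

lemma is_ell2_infsum:
  assumes v: "\<And>j. j \<in> J \<Longrightarrow> is_ell2 (v j)" and s: "(\<lambda>j. ell2_norm (v j)) summable_on J"
  shows "is_ell2 (\<lambda>x. \<Sum>\<^sub>\<infinity>j\<in>J. v j x)"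
    and "ell2_norm (\<lambda>x. \<Sum>\<^sub>\<infinity>j\<in>J. v j x) \<le> (\<Sum>\<^sub>\<infinity>j\<in>J. ell2_norm (v j))"
proof -
  have bound: "cmod (cinner g (\<lambda>x. \<Sum>\<^sub>\<infinity>j\<in>J. v j x)) \<le> (\<Sum>\<^sub>\<infinity>j\<in>J. ell2_norm (v j)) * ell2_norm g"
    if "finite {x. g x \<noteq> 0}" for g
  proof -
    have g: "is_ell2 g" by (rule is_ell2_finite_support[OF that])
    have cs: "cmod (cinner g (v j)) \<le> ell2_norm g * ell2_norm (v j)" if "j \<in> J" for j
      by (rule cinner_cauchy_schwarz[OF g v[OF that]])
    have sb: "(\<lambda>j. ell2_norm g * ell2_norm (v j)) summable_on J" by (rule summable_on_cmult_right[OF s])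
    have ab: "(\<lambda>j. norm (cinner g (v j))) summable_on J"
      by (rule summable_on_comparison_test[OF sb]) (use cs in auto)
    have "cmod (cinner g (\<lambda>x. \<Sum>\<^sub>\<infinity>j\<in>J. v j x)) = cmod (\<Sum>\<^sub>\<infinity>j\<in>J. cinner g (v j))"
      by (simp add: cinner_infsum_right[OF v s g])
    also have "\<dots> \<le> (\<Sum>\<^sub>\<infinity>j\<in>J. norm (cinner g (v j)))"
      by (rule norm_infsum_bound) (use ab in simp)
    also have "\<dots> \<le> (\<Sum>\<^sub>\<infinity>j\<in>J. ell2_norm g * ell2_norm (v j))"
      by (rule infsum_mono[OF ab sb]) (use cs in simp)
    also have "\<dots> = (\<Sum>\<^sub>\<infinity>j\<in>J. ell2_norm (v j)) * ell2_norm g"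
      by (simp add: infsum_cmult_right' mult.commute)
    finally show ?thesis .
  qed
  have "(\<Sum>\<^sub>\<infinity>j\<in>J. ell2_norm (v j)) \<ge> 0" by (rule infsum_nonneg) (simp add: ell2_norm_nonneg)
  then show "is_ell2 (\<lambda>x. \<Sum>\<^sub>\<infinity>j\<in>J. v j x)"
    and "ell2_norm (\<lambda>x. \<Sum>\<^sub>\<infinity>j\<in>J. v j x) \<le> (\<Sum>\<^sub>\<infinity>j\<in>J. ell2_norm (v j))"
    using is_ell2_if_cinner_bounded bound by blast+
qed

lemma ell2_limit_eq_infsum:
  fixes u :: "'a \<Rightarrow> complex"
  assumes u: "is_ell2 u" and v: "\<And>k. is_ell2 (v k)" and s: "(\<lambda>k. ell2_norm (v k)) summable_on UNIV"
    and lim: "(\<lambda>n. ell2_norm (\<lambda>w. u w - (\<Sum>k<n. v k w))) \<longlonglongrightarrow> 0"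
  shows "u = (\<lambda>w. \<Sum>\<^sub>\<infinity>k. v k w)"
proof
  fix w
  have sw: "(\<lambda>k. v k w) summable_on UNIV" by (rule ell2_family_summable_pointwise[OF v s])
  then have s1: "(\<lambda>k. v k w) sums (\<Sum>\<^sub>\<infinity>k. v k w)" by (intro has_sum_imp_sums) simp
  have d: "is_ell2 (\<lambda>w. u w - (\<Sum>k<n. v k w))" for n
    by (rule is_ell2_diff[OF u is_ell2_sum]) (use v in auto)
  have "(\<lambda>n. u w - (\<Sum>k<n. v k w)) \<longlonglongrightarrow> 0"
  proof (rule Lim_null_comparison[OF _ lim])
    show "\<forall>\<^sub>F n in sequentially. norm (u w - (\<Sum>k<n. v k w)) \<le> ell2_norm (\<lambda>w. u w - (\<Sum>k<n. v k w))"
      using cmod_le_ell2_norm[OF d] by simp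
  qed
  then have "(\<lambda>n. u w - (u w - (\<Sum>k<n. v k w))) \<longlonglongrightarrow> u w - 0"
    by (intro tendsto_diff tendsto_const)
  then have "(\<lambda>k. v k w) sums u w" unfolding sums_def by simp
  then show "u w = (\<Sum>\<^sub>\<infinity>k. v k w)" using s1 sums_unique2 by blast
qed

lemma infsum_mult_infsum:
  fixes a b :: "'i \<Rightarrow> complex"
  assumes a: "(\<lambda>k. cmod (a k)) summable_on UNIV" and b: "(\<lambda>l. cmod (b l)) summable_on UNIV"
  shows "(\<lambda>p. a (fst p) * b (snd p)) summable_on UNIV"
    and "(\<Sum>\<^sub>\<infinity>k. a k) * (\<Sum>\<^sub>\<infinity>l. b l) = (\<Sum>\<^sub>\<infinity>p. a (fst p) * b (snd p))"
proof -
  have ab: "(\<lambda>p. norm (a (fst p) * b (snd p))) summable_on (Sigma UNIV (\<lambda>_. UNIV))"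
  proof (rule Infinite_Sum.abs_summable_on_Sigma_iff[THEN iffD2], intro conjI ballI)
    fix k show "(\<lambda>y. norm (a (fst (k, y)) * b (snd (k, y)))) summable_on UNIV"
      using summable_on_cmult_right[OF b, of "cmod (a k)"] by (simp add: norm_mult)
  next
    have "(\<lambda>k. cmod (a k) * (\<Sum>\<^sub>\<infinity>l. cmod (b l))) summable_on UNIV"
      by (rule summable_on_cmult_left[OF a])
    then show "(\<lambda>x. norm (\<Sum>\<^sub>\<infinity>y\<in>UNIV. norm (a (fst (x, y)) * b (snd (x, y))))) summable_on UNIV"
      by (simp add: norm_mult infsum_cmult_right' infsum_nonneg)
  qed
  then have s: "(\<lambda>p. a (fst p) * b (snd p)) summable_on (Sigma UNIV (\<lambda>_. UNIV))"
    using summable_on_iff_abs_summable_on_complex by blast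
  then show "(\<lambda>p. a (fst p) * b (snd p)) summable_on UNIV" by simp
  have sa: "a summable_on UNIV" using a summable_on_iff_abs_summable_on_complex by blast
  have sb: "b summable_on UNIV" using b summable_on_iff_abs_summable_on_complex by blast
  have "(\<Sum>\<^sub>\<infinity>p\<in>Sigma UNIV (\<lambda>_. UNIV). a (fst p) * b (snd p)) = (\<Sum>\<^sub>\<infinity>k. \<Sum>\<^sub>\<infinity>l. a k * b l)"
  proof -
    have eq: "(\<lambda>(x, y). a x * b y) = (\<lambda>p. a (fst p) * b (snd p))" by (rule ext) (simp add: case_prod_beta)
    show ?thesis using infsum_Sigma'_banach[of "\<lambda>k l. a k * b l" UNIV "\<lambda>_. UNIV"] s unfolding eq by simp
  qed
  also have "\<dots> = (\<Sum>\<^sub>\<infinity>k. a k * (\<Sum>\<^sub>\<infinity>l. b l))" by (simp add: infsum_cmult_right')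
  also have "\<dots> = (\<Sum>\<^sub>\<infinity>k. a k) * (\<Sum>\<^sub>\<infinity>l. b l)" by (rule infsum_cmult_left')
  finally show "(\<Sum>\<^sub>\<infinity>k. a k) * (\<Sum>\<^sub>\<infinity>l. b l) = (\<Sum>\<^sub>\<infinity>p. a (fst p) * b (snd p))" by simp
qed

lemma infsum_tail_tendsto_0:
  fixes f :: "nat \<Rightarrow> real"
  assumes s: "f summable_on UNIV"
  shows "(\<lambda>n. \<Sum>\<^sub>\<infinity>m\<in>{n..}. f m) \<longlonglongrightarrow> 0"
proof -
  have e: "(\<Sum>\<^sub>\<infinity>m\<in>{n..}. f m) = (\<Sum>\<^sub>\<infinity>m. f m) - (\<Sum>m<n. f m)" for n
  proof -
    have u: "UNIV = {..<n} \<union> {n..}" by auto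
    have "(\<Sum>\<^sub>\<infinity>m. f m) = (\<Sum>\<^sub>\<infinity>m\<in>{..<n}. f m) + (\<Sum>\<^sub>\<infinity>m\<in>{n..}. f m)"
      by (subst u, rule infsum_Un_disjoint) (auto intro: summable_on_subset[OF s])
    then show ?thesis by simp
  qed
  have "(\<lambda>n. \<Sum>m<n. f m) \<longlonglongrightarrow> (\<Sum>\<^sub>\<infinity>m. f m)"
    using has_sum_imp_sums[of f "\<Sum>\<^sub>\<infinity>m. f m"] s by (simp add: sums_def)
  then have "(\<lambda>n. (\<Sum>\<^sub>\<infinity>m. f m) - (\<Sum>m<n. f m)) \<longlonglongrightarrow> (\<Sum>\<^sub>\<infinity>m. f m) - (\<Sum>\<^sub>\<infinity>m. f m)"
    by (intro tendsto_diff tendsto_const)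
  then show ?thesis unfolding e by simp
qed

section \<open>Matrices and the trace norm\<close>

definition ell2_rows :: "('a \<Rightarrow> 'b \<Rightarrow> complex) \<Rightarrow> bool" where
  "ell2_rows M \<longleftrightarrow> (\<forall>x. is_ell2 (\<lambda>y. M x y))"

lemma bounded_mat_ell2_rows: "bounded_mat M \<Longrightarrow> ell2_rows M"
  by (simp add: bounded_mat_def ell2_rows_def)

lemma is_ell2_mat_apply: "bounded_mat M \<Longrightarrow> is_ell2 f \<Longrightarrow> is_ell2 (mat_apply M f)"
  unfolding bounded_mat_def by blast

lemma ell2_rows_mult_summable: "ell2_rows M \<Longrightarrow> is_ell2 f \<Longrightarrow> (\<lambda>y. M x y * f y) summable_on UNIV"
  unfolding ell2_rows_def by (rule ell2_mult_summable) auto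

lemma mat_apply_add:
  assumes "ell2_rows M" "is_ell2 f" "is_ell2 g"
  shows "mat_apply M (\<lambda>y. f y + g y) = (\<lambda>x. mat_apply M f x + mat_apply M g x)"
  unfolding mat_apply_def
  using infsum_add[OF ell2_rows_mult_summable[OF assms(1,2)] ell2_rows_mult_summable[OF assms(1,3)]]
  by (simp add: distrib_left)

lemma mat_apply_scale: "mat_apply M (\<lambda>y. c * f y) = (\<lambda>x. c * mat_apply M f x)"
proof
  fix x
  have "(\<Sum>\<^sub>\<infinity>y. M x y * (c * f y)) = (\<Sum>\<^sub>\<infinity>y. c * (M x y * f y))"
    by (simp add: algebra_simps)
  also have "\<dots> = c * (\<Sum>\<^sub>\<infinity>y. M x y * f y)" by (rule infsum_cmult_right')
  finally show "mat_apply M (\<lambda>y. c * f y) x = c * mat_apply M f x" by (simp add: mat_apply_def)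
qed

lemma mat_apply_diff:
  assumes "ell2_rows M" "is_ell2 f" "is_ell2 g"
  shows "mat_apply M (\<lambda>y. f y - g y) = (\<lambda>x. mat_apply M f x - mat_apply M g x)"
proof -
  have "mat_apply M (\<lambda>y. f y + (-1) * g y) = (\<lambda>x. mat_apply M f x + mat_apply M (\<lambda>y. (-1) * g y) x)"
    by (rule mat_apply_add[OF assms(1,2) is_ell2_scale[OF assms(3)]])
  also have "mat_apply M (\<lambda>y. (-1) * g y) = (\<lambda>x. (-1) * mat_apply M g x)" by (rule mat_apply_scale)
  finally show ?thesis by simp
qed

lemma mat_apply_add_mat:
  assumes "ell2_rows M" "ell2_rows N" "is_ell2 f"
  shows "mat_apply (\<lambda>x y. M x y + N x y) f = (\<lambda>x. mat_apply M f x + mat_apply N f x)"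
  unfolding mat_apply_def
  using infsum_add[OF ell2_rows_mult_summable[OF assms(1,3)] ell2_rows_mult_summable[OF assms(2,3)]]
  by (simp add: distrib_right)

lemma mat_apply_scale_mat: "mat_apply (\<lambda>x y. c * M x y) f = (\<lambda>x. c * mat_apply M f x)"
proof
  fix x
  have "(\<Sum>\<^sub>\<infinity>y. c * M x y * f y) = (\<Sum>\<^sub>\<infinity>y. c * (M x y * f y))"
    by (simp add: algebra_simps)
  also have "\<dots> = c * (\<Sum>\<^sub>\<infinity>y. M x y * f y)" by (rule infsum_cmult_right')
  finally show "mat_apply (\<lambda>x y. c * M x y) f x = c * mat_apply M f x" by (simp add: mat_apply_def)
qed

lemma mat_apply_basis_vec: "mat_apply M (basis_vec z) = (\<lambda>x. M x z)"
proof
  fix x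
  have "mat_apply M (basis_vec z) x = (\<Sum>\<^sub>\<infinity>y\<in>{z}. M x y * basis_vec z y)"
    unfolding mat_apply_def by (rule infsum_cong_neutral) (auto simp: basis_vec_def)
  then show "mat_apply M (basis_vec z) x = M x z" by (simp add: basis_vec_def)
qed

lemma ell2_rows_add: "ell2_rows M \<Longrightarrow> ell2_rows N \<Longrightarrow> ell2_rows (\<lambda>x y. M x y + N x y)"
  unfolding ell2_rows_def by (simp add: is_ell2_add)

lemma ell2_rows_scale: "ell2_rows M \<Longrightarrow> ell2_rows (\<lambda>x y. c * M x y)"
  unfolding ell2_rows_def by (simp add: is_ell2_scale)

lemma ell2_rows_lincomb: "ell2_rows M \<Longrightarrow> ell2_rows N \<Longrightarrow> ell2_rows (\<lambda>x y. M x y + c * N x y)"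
  by (simp add: ell2_rows_add ell2_rows_scale)

lemma ell2_rows_zero: "ell2_rows (\<lambda>x y. 0)"
  by (simp add: ell2_rows_def is_ell2_zero)

lemma ell2_rows_sum:
  assumes "\<And>k. k \<in> K \<Longrightarrow> ell2_rows (M k)"
  shows "ell2_rows (\<lambda>x y. \<Sum>k\<in>K. M k x y)"
  using assms unfolding ell2_rows_def by (auto intro!: is_ell2_sum)

definition trace_norm_sum :: "('a \<Rightarrow> 'a \<Rightarrow> complex) \<Rightarrow> nat \<Rightarrow> (nat \<Rightarrow> 'a \<Rightarrow> complex) \<Rightarrow> (nat \<Rightarrow> 'a \<Rightarrow> complex) \<Rightarrow> real" where
  "trace_norm_sum M n e f = (\<Sum>i<n. cmod (cinner (f i) (mat_apply M (e i))))"

lemma trace_norm_set_iff: "s \<in> trace_norm_set M \<longleftrightarrow> (\<exists>n e f. s = trace_norm_sum M n e f \<and> orthonormal_fam n e \<and> orthonormal_fam n f)"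
  unfolding trace_norm_set_def trace_norm_sum_def by blast

lemma zero_in_trace_norm_set: "0 \<in> trace_norm_set M"
  unfolding trace_norm_set_iff trace_norm_sum_def orthonormal_fam_def by (rule exI[of _ 0]) auto

lemma trace_norm_set_nonempty: "trace_norm_set M \<noteq> {}"
  using zero_in_trace_norm_set by blast

lemma trace_norm_nonneg: "bdd_above (trace_norm_set M) \<Longrightarrow> trace_norm M \<ge> 0"
  unfolding trace_norm_def using zero_in_trace_norm_set by (meson cSup_upper)

lemma trace_norm_ge: "bdd_above (trace_norm_set M) \<Longrightarrow> s \<in> trace_norm_set M \<Longrightarrow> s \<le> trace_norm M"
  unfolding trace_norm_def by (rule cSup_upper)

lemma trace_norm_le: "(\<And>s. s \<in> trace_norm_set M \<Longrightarrow> s \<le> B) \<Longrightarrow> trace_norm M \<le> B"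
  unfolding trace_norm_def by (rule cSup_least[OF trace_norm_set_nonempty])

lemma cmod_cinner_le_trace_norm:
  assumes bdd: "bdd_above (trace_norm_set M)"
    and e: "is_ell2 e" "ell2_sqnorm e = 1" and g: "is_ell2 g" "ell2_sqnorm g = 1"
  shows "cmod (cinner g (mat_apply M e)) \<le> trace_norm M"
proof -
  have "trace_norm_sum M (Suc 0) (\<lambda>_. e) (\<lambda>_. g) \<in> trace_norm_set M"
    unfolding trace_norm_set_iff using orthonormal_fam_single[OF e] orthonormal_fam_single[OF g] by blast
  then show ?thesis using trace_norm_ge[OF bdd] by (simp add: trace_norm_sum_def)
qed

lemma cinner_mat_apply_le_trace_norm:
  assumes bdd: "bdd_above (trace_norm_set M)" and e: "is_ell2 e" and g: "is_ell2 g"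
  shows "cmod (cinner g (mat_apply M e)) \<le> trace_norm M * ell2_norm g * ell2_norm e"
proof (cases "ell2_norm g = 0 \<or> ell2_norm e = 0")
  case True
  then have "g = (\<lambda>x. 0) \<or> e = (\<lambda>x. 0)"
    using ell2_norm_eq_0_imp[OF g] ell2_norm_eq_0_imp[OF e] by auto
  then have "cinner g (mat_apply M e) = 0"
    by (auto simp: cinner_def mat_apply_def)
  then show ?thesis using True by auto
next
  case False
  then have pos: "ell2_norm g > 0" "ell2_norm e > 0"
    using ell2_norm_nonneg[of g] ell2_norm_nonneg[of e] by auto
  have "cmod (cinner (\<lambda>x. complex_of_real (1 / ell2_norm g) * g x)
      (mat_apply M (\<lambda>x. complex_of_real (1 / ell2_norm e) * e x))) \<le> trace_norm M"
    using cmod_cinner_le_trace_norm[OF bdd] ell2_normalize(1,2) e g pos by blast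
  moreover have "cinner (\<lambda>x. complex_of_real (1 / ell2_norm g) * g x)
      (mat_apply M (\<lambda>x. complex_of_real (1 / ell2_norm e) * e x))
    = cnj (complex_of_real (1 / ell2_norm g)) * (complex_of_real (1 / ell2_norm e) * cinner g (mat_apply M e))"
    unfolding mat_apply_scale cinner_scale_left cinner_scale_right ..
  ultimately have "cmod (cinner g (mat_apply M e)) / (ell2_norm g * ell2_norm e) \<le> trace_norm M"
    using pos by (simp add: norm_mult norm_divide)
  then show ?thesis using pos by (simp add: field_simps)
qed

lemma mat_apply_le_trace_norm:
  assumes bdd: "bdd_above (trace_norm_set M)" and e: "is_ell2 e"
  shows "is_ell2 (mat_apply M e)" and "ell2_norm (mat_apply M e) \<le> trace_norm M * ell2_norm e"
proof -
  have "trace_norm M \<ge> 0" by (rule trace_norm_nonneg[OF bdd])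
  then have "trace_norm M * ell2_norm e \<ge> 0" by (simp add: ell2_norm_nonneg)
  moreover have "cmod (cinner g (mat_apply M e)) \<le> trace_norm M * ell2_norm e * ell2_norm g"
    if "finite {x. g x \<noteq> 0}" for g
    using cinner_mat_apply_le_trace_norm[OF bdd e is_ell2_finite_support[OF that]]
    by (simp add: mult_ac)
  ultimately show "is_ell2 (mat_apply M e)" and "ell2_norm (mat_apply M e) \<le> trace_norm M * ell2_norm e"
    using is_ell2_if_cinner_bounded by blast+
qed

lemma bounded_mat_if_trace_norm_bdd:
  assumes r: "ell2_rows M" and bdd: "bdd_above (trace_norm_set M)"
  shows "bounded_mat M"
  unfolding bounded_mat_def
  using r mat_apply_le_trace_norm[OF bdd] by (auto simp: ell2_rows_def)

lemma trace_class_iff: "trace_class M \<longleftrightarrow> ell2_rows M \<and> bdd_above (trace_norm_set M)"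
  unfolding trace_class_def by (auto intro: bounded_mat_ell2_rows bounded_mat_if_trace_norm_bdd)

lemma trace_class_bounded_mat: "trace_class M \<Longrightarrow> bounded_mat M"
  unfolding trace_class_def by simp

lemma trace_norm_sum_lincomb_le:
  assumes M: "bounded_mat M" and N: "bounded_mat N" and on: "orthonormal_fam n e" "orthonormal_fam n f"
  shows "trace_norm_sum (\<lambda>x y. M x y + c * N x y) n e f \<le> trace_norm_sum M n e f + cmod c * trace_norm_sum N n e f"
proof -
  have rM: "ell2_rows M" and rN: "ell2_rows N" using M N by (auto intro: bounded_mat_ell2_rows)
  have e: "is_ell2 (e i)" and f: "is_ell2 (f i)" if "i < n" for i
    using on that by (auto simp: orthonormal_fam_def)
  have "trace_norm_sum (\<lambda>x y. M x y + c * N x y) n e f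
     = (\<Sum>i<n. cmod (cinner (f i) (\<lambda>x. mat_apply M (e i) x + c * mat_apply N (e i) x)))"
    unfolding trace_norm_sum_def
    by (rule sum.cong) (auto simp: mat_apply_add_mat[OF rM ell2_rows_scale[OF rN] e] mat_apply_scale_mat)
  also have "\<dots> \<le> (\<Sum>i<n. cmod (cinner (f i) (mat_apply M (e i))) + cmod c * cmod (cinner (f i) (mat_apply N (e i))))"
  proof (rule sum_mono)
    fix i assume "i \<in> {..<n}"
    then have i: "i < n" by simp
    have a: "is_ell2 (mat_apply M (e i))" "is_ell2 (\<lambda>x. c * mat_apply N (e i) x)"
      using is_ell2_mat_apply[OF M e[OF i]] is_ell2_mat_apply[OF N e[OF i]] is_ell2_scale by auto
    have "cinner (f i) (\<lambda>x. mat_apply M (e i) x + c * mat_apply N (e i) x)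
       = cinner (f i) (mat_apply M (e i)) + c * cinner (f i) (mat_apply N (e i))"
      using cinner_add_right[OF f[OF i] a] by (simp add: cinner_scale_right)
    then show "cmod (cinner (f i) (\<lambda>x. mat_apply M (e i) x + c * mat_apply N (e i) x))
        \<le> cmod (cinner (f i) (mat_apply M (e i))) + cmod c * cmod (cinner (f i) (mat_apply N (e i)))"
      by (metis norm_mult norm_triangle_ineq)
  qed
  finally show ?thesis by (simp add: trace_norm_sum_def sum.distrib sum_distrib_left)
qed

lemma trace_class_lincomb:
  assumes M: "trace_class M" and N: "trace_class N"
  shows "trace_class (\<lambda>x y. M x y + c * N x y)"
    and "trace_norm (\<lambda>x y. M x y + c * N x y) \<le> trace_norm M + cmod c * trace_norm N"
proof -
  have b: "s \<le> trace_norm M + cmod c * trace_norm N" if s_in: "s \<in> trace_norm_set (\<lambda>x y. M x y + c * N x y)" for s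
  proof -
    obtain n e f where s: "s = trace_norm_sum (\<lambda>x y. M x y + c * N x y) n e f" and on: "orthonormal_fam n e" "orthonormal_fam n f"
      using s_in unfolding trace_norm_set_iff by blast
    have "s \<le> trace_norm_sum M n e f + cmod c * trace_norm_sum N n e f"
      unfolding s by (rule trace_norm_sum_lincomb_le[OF trace_class_bounded_mat[OF M] trace_class_bounded_mat[OF N] on])
    also have "\<dots> \<le> trace_norm M + cmod c * trace_norm N"
      using M N on unfolding trace_class_iff
      by (intro add_mono mult_left_mono trace_norm_ge) (auto simp: trace_norm_set_iff)
    finally show ?thesis .
  qed
  show "trace_class (\<lambda>x y. M x y + c * N x y)"
    unfolding trace_class_iff
  proof (intro conjI)
    show "ell2_rows (\<lambda>x y. M x y + c * N x y)" using M N by (simp add: trace_class_iff ell2_rows_lincomb)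
    show "bdd_above (trace_norm_set (\<lambda>x y. M x y + c * N x y))"
      by (rule bdd_aboveI) (rule b)
  qed
  show "trace_norm (\<lambda>x y. M x y + c * N x y) \<le> trace_norm M + cmod c * trace_norm N"
    by (rule trace_norm_le) (rule b)
qed

lemma trace_norm_set_zero: "trace_norm_set (\<lambda>(x::'a) (y::'a). 0 :: complex) = {0}"
proof -
  have "mat_apply (\<lambda>x y. 0 :: complex) e = (\<lambda>x. 0)" for e :: "'a \<Rightarrow> complex"
    by (simp add: mat_apply_def)
  then have "trace_norm_sum (\<lambda>(x::'a) (y::'a). 0 :: complex) n e f = 0" for n and e f :: "nat \<Rightarrow> 'a \<Rightarrow> complex"
    by (simp add: trace_norm_sum_def cinner_zero_right)
  then have "s = 0" if "s \<in> trace_norm_set (\<lambda>(x::'a) (y::'a). 0 :: complex)" for s :: real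
    using that unfolding trace_norm_set_iff by auto
  then show ?thesis using zero_in_trace_norm_set by blast
qed

lemma trace_class_zero: "trace_class (\<lambda>x y. 0)" and trace_norm_zero: "trace_norm (\<lambda>x y. 0) = 0"
  by (auto simp: trace_class_iff trace_norm_set_zero ell2_rows_zero trace_norm_def)

lemma trace_class_scale:
  fixes M :: "'a \<Rightarrow> 'a \<Rightarrow> complex"
  assumes M: "trace_class M"
  shows "trace_class (\<lambda>x y. c * M x y)" and "trace_norm (\<lambda>x y. c * M x y) \<le> cmod c * trace_norm M"
proof -
  have e: "(\<lambda>(x::'a) (y::'a). (0::complex) + c * M x y) = (\<lambda>x y. c * M x y)" by simp
  show "trace_class (\<lambda>x y. c * M x y)" using trace_class_lincomb(1)[OF trace_class_zero M, of c] unfolding e .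
  have "trace_norm (\<lambda>x y. c * M x y) \<le> trace_norm (\<lambda>(x::'a) (y::'a). 0::complex) + cmod c * trace_norm M"
    using trace_class_lincomb(2)[OF trace_class_zero M, of c] unfolding e .
  then show "trace_norm (\<lambda>x y. c * M x y) \<le> cmod c * trace_norm M"
    unfolding trace_norm_zero by simp
qed

lemma trace_norm_scale:
  assumes M: "trace_class M"
  shows "trace_norm (\<lambda>x y. c * M x y) = cmod c * trace_norm M"
proof (cases "c = 0")
  case True then show ?thesis using trace_norm_zero by simp
next
  case False
  have "trace_norm M = trace_norm (\<lambda>x y. (1/c) * (c * M x y))" using False by simp
  also have "\<dots> \<le> cmod (1/c) * trace_norm (\<lambda>x y. c * M x y)"
    by (rule trace_class_scale(2)[OF trace_class_scale(1)[OF M]])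
  finally have "cmod c * trace_norm M \<le> trace_norm (\<lambda>x y. c * M x y)"
    using False by (simp add: norm_divide field_simps)
  then show ?thesis using trace_class_scale(2)[OF M, of c] by simp
qed

lemma trace_class_diff:
  assumes M: "trace_class M" and N: "trace_class N"
  shows "trace_class (\<lambda>x y. M x y - N x y)"
    and "trace_norm (\<lambda>x y. M x y - N x y) \<le> trace_norm M + trace_norm N"
  using trace_class_lincomb[OF M N, of "-1"] by auto

lemma trace_class_scale_iff:
  assumes "c \<noteq> 0" shows "trace_class (\<lambda>x y. c * M x y) \<longleftrightarrow> trace_class M"
proof
  assume "trace_class (\<lambda>x y. c * M x y)"
  from trace_class_scale(1)[OF this, of "1 / c"] show "trace_class M" using assms by simp
qed (rule trace_class_scale(1))

lemma Sup_not_bdd_above_real: "\<not> bdd_above (X :: real set) \<Longrightarrow> Sup X = Sup (UNIV :: real set)"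
proof -
  assume "\<not> bdd_above X"
  then have "(\<lambda>z. \<forall>x\<in>X. x \<le> z) = (\<lambda>z. \<forall>x\<in>UNIV. x \<le> z)"
    by (auto simp: bdd_above_def fun_eq_iff)
  then show ?thesis unfolding Sup_real_def by simp
qed

lemma trace_norm_not_bdd: "\<not> bdd_above (trace_norm_set M) \<Longrightarrow> trace_norm M = Sup (UNIV :: real set)"
  unfolding trace_norm_def by (rule Sup_not_bdd_above_real)

lemma column_le_trace_norm:
  assumes "trace_class M" shows "is_ell2 (\<lambda>x. M x z)" and "ell2_norm (\<lambda>x. M x z) \<le> trace_norm M"
proof -
  have b: "bdd_above (trace_norm_set M)" using assms by (simp add: trace_class_iff)
  show "is_ell2 (\<lambda>x. M x z)"
    using mat_apply_le_trace_norm(1)[OF b is_ell2_basis_vec] by (simp add: mat_apply_basis_vec)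
  show "ell2_norm (\<lambda>x. M x z) \<le> trace_norm M"
    using mat_apply_le_trace_norm(2)[OF b is_ell2_basis_vec]
    by (simp add: mat_apply_basis_vec ell2_norm_eq_sqrt ell2_sqnorm_basis_vec)
qed

lemma cmod_entry_le_trace_norm:
  assumes "trace_class M" shows "cmod (M a b) \<le> trace_norm M"
  using cinner_mat_apply_le_trace_norm[of M "basis_vec b" "basis_vec a"] assms
  by (simp add: trace_class_iff is_ell2_basis_vec cinner_basis_vec_left mat_apply_basis_vec
      ell2_norm_eq_sqrt ell2_sqnorm_basis_vec)

lemma trace_norm_pos_if_entry_nonzero:
  assumes "trace_class M" "M a b \<noteq> 0" shows "trace_norm M > 0"
  using cmod_entry_le_trace_norm[OF assms(1), of a b] assms(2) by (meson norm_le_zero_iff not_le order_trans)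

definition nuclear_mat :: "('j \<Rightarrow> 'a \<Rightarrow> complex) \<Rightarrow> ('j \<Rightarrow> 'a \<Rightarrow> complex) \<Rightarrow> 'j set \<Rightarrow> 'a \<Rightarrow> 'a \<Rightarrow> complex"
  where "nuclear_mat p q J = (\<lambda>x y. \<Sum>\<^sub>\<infinity>j\<in>J. p j x * cnj (q j y))"

lemma mat_apply_rank_one: "mat_apply (\<lambda>x y. p x * cnj (q y)) f = (\<lambda>x. p x * cinner q f)"
proof
  fix x
  have "(\<Sum>\<^sub>\<infinity>y. p x * cnj (q y) * f y) = (\<Sum>\<^sub>\<infinity>y. p x * (cnj (q y) * f y))"
    by (simp add: mult.assoc)
  also have "\<dots> = p x * (\<Sum>\<^sub>\<infinity>y. cnj (q y) * f y)" by (rule infsum_cmult_right')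
  finally show "mat_apply (\<lambda>x y. p x * cnj (q y)) f x = p x * cinner q f"
    by (simp add: mat_apply_def cinner_def)
qed

context
  fixes p q :: "'j \<Rightarrow> 'a \<Rightarrow> complex" and J :: "'j set"
  assumes p: "\<And>j. j \<in> J \<Longrightarrow> is_ell2 (p j)" and q: "\<And>j. j \<in> J \<Longrightarrow> is_ell2 (q j)"
    and s: "(\<lambda>j. ell2_norm (p j) * ell2_norm (q j)) summable_on J"
begin

lemma nuclear_mat_row:
  shows "is_ell2 (\<lambda>y. nuclear_mat p q J x y)"
    and "\<And>e. is_ell2 e \<Longrightarrow> mat_apply (nuclear_mat p q J) e x = (\<Sum>\<^sub>\<infinity>j\<in>J. p j x * cinner (q j) e)"
proof -
  define v where "v j = (\<lambda>y. p j x * cnj (q j y))" for j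
  have v2: "is_ell2 (v j)" if "j \<in> J" for j
    unfolding v_def by (rule is_ell2_scale[OF is_ell2_cnj[OF q[OF that]]])
  have vn: "ell2_norm (v j) \<le> ell2_norm (p j) * ell2_norm (q j)" if "j \<in> J" for j
    unfolding v_def ell2_norm_scale ell2_norm_cnj
    using cmod_le_ell2_norm[OF p[OF that], of x] ell2_norm_nonneg[of "q j"] by (simp add: mult_right_mono)
  have vs: "(\<lambda>j. ell2_norm (v j)) summable_on J"
    by (rule summable_on_comparison_test[OF s]) (use vn in \<open>auto simp: ell2_norm_nonneg\<close>)
  have row: "(\<lambda>y. nuclear_mat p q J x y) = (\<lambda>y. \<Sum>\<^sub>\<infinity>j\<in>J. v j y)" by (simp add: nuclear_mat_def v_def)
  show "is_ell2 (\<lambda>y. nuclear_mat p q J x y)" unfolding row by (rule is_ell2_infsum(1)[OF v2 vs])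
  fix e :: "'a \<Rightarrow> complex" assume e: "is_ell2 e"
  have "mat_apply (nuclear_mat p q J) e x = cinner (\<lambda>y. cnj (e y)) (\<lambda>y. nuclear_mat p q J x y)"
    by (simp add: mat_apply_def cinner_def mult.commute)
  also have "\<dots> = (\<Sum>\<^sub>\<infinity>j\<in>J. cinner (\<lambda>y. cnj (e y)) (v j))"
    unfolding row by (rule cinner_infsum_right[OF v2 vs is_ell2_cnj[OF e]])
  also have "\<dots> = (\<Sum>\<^sub>\<infinity>j\<in>J. p j x * cinner (q j) e)"
  proof (rule infsum_cong)
    fix j
    have "cinner (\<lambda>y. cnj (e y)) (v j) = (\<Sum>\<^sub>\<infinity>y. p j x * (cnj (q j y) * e y))"
      unfolding cinner_def v_def by (simp add: algebra_simps)
    also have "\<dots> = p j x * cinner (q j) e" unfolding cinner_def by (rule infsum_cmult_right')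
    finally show "cinner (\<lambda>y. cnj (e y)) (v j) = p j x * cinner (q j) e" .
  qed
  finally show "mat_apply (nuclear_mat p q J) e x = (\<Sum>\<^sub>\<infinity>j\<in>J. p j x * cinner (q j) e)" .
qed

lemma nuclear_mat_ell2_rows: "ell2_rows (nuclear_mat p q J)"
  using nuclear_mat_row(1) by (simp add: ell2_rows_def)

lemma nuclear_mat_form:
  assumes e: "is_ell2 e" and f: "is_ell2 f"
  shows "cinner f (mat_apply (nuclear_mat p q J) e) = (\<Sum>\<^sub>\<infinity>j\<in>J. cinner (q j) e * cinner f (p j))"
    and "(\<lambda>j. cmod (cinner (q j) e * cinner f (p j))) summable_on J"
proof -
  define w where "w j = (\<lambda>x. cinner (q j) e * p j x)" for j
  have w2: "is_ell2 (w j)" if "j \<in> J" for j unfolding w_def by (rule is_ell2_scale[OF p[OF that]])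
  have wn: "ell2_norm (w j) \<le> ell2_norm e * (ell2_norm (p j) * ell2_norm (q j))" if "j \<in> J" for j
  proof -
    have "ell2_norm (w j) = cmod (cinner (q j) e) * ell2_norm (p j)" unfolding w_def ell2_norm_scale ..
    also have "\<dots> \<le> (ell2_norm (q j) * ell2_norm e) * ell2_norm (p j)"
      by (rule mult_right_mono[OF cinner_cauchy_schwarz[OF q[OF that] e] ell2_norm_nonneg])
    finally show ?thesis by (simp add: algebra_simps)
  qed
  have ws: "(\<lambda>j. ell2_norm (w j)) summable_on J"
    by (rule summable_on_comparison_test[OF summable_on_cmult_right[OF s]]) (use wn in \<open>auto simp: ell2_norm_nonneg\<close>)
  have ap: "mat_apply (nuclear_mat p q J) e = (\<lambda>x. \<Sum>\<^sub>\<infinity>j\<in>J. w j x)"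
    by (rule ext) (simp add: nuclear_mat_row(2)[OF e] w_def mult.commute)
  show "cinner f (mat_apply (nuclear_mat p q J) e) = (\<Sum>\<^sub>\<infinity>j\<in>J. cinner (q j) e * cinner f (p j))"
    unfolding ap by (simp only: cinner_infsum_right[OF w2 ws f]) (simp add: w_def cinner_scale_right)
  have b: "cmod (cinner (q j) e * cinner f (p j)) \<le> (ell2_norm e * ell2_norm f) * (ell2_norm (p j) * ell2_norm (q j))"
    if "j \<in> J" for j
  proof -
    have "cmod (cinner (q j) e * cinner f (p j)) \<le> (ell2_norm (q j) * ell2_norm e) * (ell2_norm f * ell2_norm (p j))"
      unfolding norm_mult
      by (rule mult_mono[OF cinner_cauchy_schwarz[OF q[OF that] e] cinner_cauchy_schwarz[OF f p[OF that]]])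
         (auto intro: mult_nonneg_nonneg ell2_norm_nonneg)
    then show ?thesis by (simp add: algebra_simps)
  qed
  show "(\<lambda>j. cmod (cinner (q j) e * cinner f (p j))) summable_on J"
    by (rule summable_on_comparison_test[OF summable_on_cmult_right[OF s]]) (use b in auto)
qed

lemma nuclear_mat_trace_norm_sum_le:
  assumes e: "orthonormal_fam n e" and f: "orthonormal_fam n f"
  shows "trace_norm_sum (nuclear_mat p q J) n e f \<le> (\<Sum>\<^sub>\<infinity>j\<in>J. ell2_norm (p j) * ell2_norm (q j))"
proof -
  have ei: "is_ell2 (e i)" and fi: "is_ell2 (f i)" if "i < n" for i
    using orthonormal_fam_norm e f that by auto
  have "trace_norm_sum (nuclear_mat p q J) n e f = (\<Sum>i<n. cmod (\<Sum>\<^sub>\<infinity>j\<in>J. cinner (q j) (e i) * cinner (f i) (p j)))"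
    unfolding trace_norm_sum_def by (rule sum.cong) (auto simp: nuclear_mat_form(1)[OF ei fi])
  also have "\<dots> \<le> (\<Sum>i<n. \<Sum>\<^sub>\<infinity>j\<in>J. cmod (cinner (q j) (e i) * cinner (f i) (p j)))"
    by (rule sum_mono, rule norm_infsum_bound) (use nuclear_mat_form(2)[OF ei fi] in simp)
  also have "\<dots> = (\<Sum>\<^sub>\<infinity>j\<in>J. \<Sum>i<n. cmod (cinner (q j) (e i) * cinner (f i) (p j)))"
    by (rule infsum_sum_swap(1)[symmetric]) (use nuclear_mat_form(2)[OF ei fi] in simp)
  also have "\<dots> \<le> (\<Sum>\<^sub>\<infinity>j\<in>J. ell2_norm (p j) * ell2_norm (q j))"
  proof (rule infsum_mono)
    show "(\<lambda>j. \<Sum>i<n. cmod (cinner (q j) (e i) * cinner (f i) (p j))) summable_on J"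
      by (rule infsum_sum_swap(2)) (use nuclear_mat_form(2)[OF ei fi] in auto)
    show "(\<lambda>j. ell2_norm (p j) * ell2_norm (q j)) summable_on J" by (rule s)
    fix j assume j: "j \<in> J"
    show "(\<Sum>i<n. cmod (cinner (q j) (e i) * cinner (f i) (p j))) \<le> ell2_norm (p j) * ell2_norm (q j)"
      using sum_cinner_orthonormal_le[OF e f p[OF j] q[OF j]] by (simp add: norm_mult mult.commute)
  qed
  finally show ?thesis .
qed

lemma trace_class_nuclear:
  shows "trace_class (\<lambda>x y. \<Sum>\<^sub>\<infinity>j\<in>J. p j x * cnj (q j y))"
    and "trace_norm (\<lambda>x y. \<Sum>\<^sub>\<infinity>j\<in>J. p j x * cnj (q j y)) \<le> (\<Sum>\<^sub>\<infinity>j\<in>J. ell2_norm (p j) * ell2_norm (q j))"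
proof -
  have bound: "t \<le> (\<Sum>\<^sub>\<infinity>j\<in>J. ell2_norm (p j) * ell2_norm (q j))"
    if "t \<in> trace_norm_set (nuclear_mat p q J)" for t
    using that nuclear_mat_trace_norm_sum_le unfolding trace_norm_set_iff by blast
  then have "bdd_above (trace_norm_set (nuclear_mat p q J))" by (rule bdd_aboveI)
  then show "trace_class (\<lambda>x y. \<Sum>\<^sub>\<infinity>j\<in>J. p j x * cnj (q j y))"
    using nuclear_mat_ell2_rows unfolding trace_class_iff nuclear_mat_def by simp
  show "trace_norm (\<lambda>x y. \<Sum>\<^sub>\<infinity>j\<in>J. p j x * cnj (q j y)) \<le> (\<Sum>\<^sub>\<infinity>j\<in>J. ell2_norm (p j) * ell2_norm (q j))"
    using bound unfolding nuclear_mat_def by (rule trace_norm_le)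
qed

end

lemma trace_class_rank_one:
  assumes p: "is_ell2 p" and q: "is_ell2 q"
  shows "trace_class (\<lambda>x y. p x * cnj (q y))" and "trace_norm (\<lambda>x y. p x * cnj (q y)) \<le> ell2_norm p * ell2_norm q"
proof -
  have e: "(\<lambda>x y. \<Sum>\<^sub>\<infinity>j\<in>{()}. (\<lambda>_. p) j x * cnj ((\<lambda>_. q) j y)) = (\<lambda>x y. p x * cnj (q y))"
    by simp
  have s: "(\<lambda>j. ell2_norm ((\<lambda>_. p) j) * ell2_norm ((\<lambda>_. q) j)) summable_on {()}" by simp
  show "trace_class (\<lambda>x y. p x * cnj (q y))"
    using trace_class_nuclear(1)[of "{()}" "\<lambda>_. p" "\<lambda>_. q"] p q s unfolding e by simp
  show "trace_norm (\<lambda>x y. p x * cnj (q y)) \<le> ell2_norm p * ell2_norm q"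
    using trace_class_nuclear(2)[of "{()}" "\<lambda>_. p" "\<lambda>_. q"] p q s unfolding e by simp
qed

lemma trace_norm_rank_one:
  assumes p: "is_ell2 p" and q: "is_ell2 q"
  shows "trace_norm (\<lambda>x y. p x * cnj (q y)) = ell2_norm p * ell2_norm q"
proof (cases "ell2_norm p = 0 \<or> ell2_norm q = 0")
  case True
  then have "(\<lambda>x y. p x * cnj (q y)) = (\<lambda>x y. 0)"
    using ell2_norm_eq_0_imp[OF p] ell2_norm_eq_0_imp[OF q] by (auto simp: fun_eq_iff)
  then show ?thesis using True by (auto simp: trace_norm_zero)
next
  case False
  then have pos: "ell2_norm p > 0" "ell2_norm q > 0"
    using ell2_norm_nonneg[of p] ell2_norm_nonneg[of q] by auto
  define e where "e = (\<lambda>x. complex_of_real (1 / ell2_norm q) * q x)"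
  define f where "f = (\<lambda>x. complex_of_real (1 / ell2_norm p) * p x)"
  have "mat_apply (\<lambda>x y. p x * cnj (q y)) e = (\<lambda>x. cinner q e * p x)"
    by (simp add: mat_apply_rank_one mult.commute)
  then have "cinner f (mat_apply (\<lambda>x y. p x * cnj (q y)) e) = cinner q e * cinner f p"
    by (simp add: cinner_scale_right)
  also have "\<dots> = complex_of_real (ell2_norm q * ell2_norm p)"
    using ell2_normalize(3)[OF q pos(2)] ell2_normalize(3)[OF p pos(1)]
    by (simp add: e_def f_def cinner_commute[of q])
  finally have "ell2_norm p * ell2_norm q = cmod (cinner f (mat_apply (\<lambda>x y. p x * cnj (q y)) e))"
    using pos by (simp add: mult.commute norm_mult)
  also have "\<dots> \<le> trace_norm (\<lambda>x y. p x * cnj (q y))"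
    using trace_class_rank_one(1)[OF p q] ell2_normalize(1,2)[OF q pos(2)] ell2_normalize(1,2)[OF p pos(1)]
    unfolding e_def f_def trace_class_iff by (blast intro: cmod_cinner_le_trace_norm)
  finally show ?thesis using trace_class_rank_one(2)[OF p q] by simp
qed

lemma ell2_rows_tensor_op:
  assumes "ell2_rows X" "ell2_rows Y" shows "ell2_rows (tensor_op X Y)"
  using assms is_ell2_tensor(1) unfolding ell2_rows_def tensor_op_def by (auto simp: case_prod_beta)

definition basis_proj :: "'a \<Rightarrow> 'a \<Rightarrow> 'a \<Rightarrow> complex" where
  "basis_proj a = (\<lambda>s s'. basis_vec a s * cnj (basis_vec a s'))"

lemma basis_proj_trace_norm: "trace_class (basis_proj a)" "trace_norm (basis_proj a) = 1"
  unfolding basis_proj_def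
  using trace_class_rank_one(1)[OF is_ell2_basis_vec is_ell2_basis_vec]
    trace_norm_rank_one[OF is_ell2_basis_vec is_ell2_basis_vec]
  by (auto simp: ell2_norm_eq_sqrt ell2_sqnorm_basis_vec)

text \<open>If \<open>x\<close> or \<open>x'\<close> vanishes, any matrix of trace norm \<open>1\<close> does: its coefficient in the
  expansion below is then \<open>0\<close>.\<close>

definition normalized_rank_one :: "('a \<Rightarrow> complex) \<Rightarrow> ('a \<Rightarrow> complex) \<Rightarrow> 'a \<Rightarrow> 'a \<Rightarrow> 'a \<Rightarrow> complex" where
  "normalized_rank_one x x' a = (if ell2_norm x * ell2_norm x' = 0 then basis_proj a
     else (\<lambda>s s'. complex_of_real (1 / (ell2_norm x * ell2_norm x')) * (x s * cnj (x' s'))))"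

lemma normalized_rank_one_trace_norm:
  assumes "is_ell2 x" "is_ell2 x'"
  shows "trace_class (normalized_rank_one x x' a)" "trace_norm (normalized_rank_one x x' a) = 1"
proof -
  have "trace_class (normalized_rank_one x x' a) \<and> trace_norm (normalized_rank_one x x' a) = 1"
  proof (cases "ell2_norm x * ell2_norm x' = 0")
    case True
    then show ?thesis by (simp add: normalized_rank_one_def basis_proj_trace_norm)
  next
    case False
    then have pos: "ell2_norm x * ell2_norm x' > 0"
      using ell2_norm_nonneg[of x] ell2_norm_nonneg[of x'] by (simp add: less_le)
    have e: "normalized_rank_one x x' a
        = (\<lambda>s s'. complex_of_real (1 / (ell2_norm x * ell2_norm x')) * (x s * cnj (x' s')))"
      using False by (simp add: normalized_rank_one_def)
    have "trace_class (normalized_rank_one x x' a)"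
      unfolding e by (rule trace_class_scale(1)[OF trace_class_rank_one(1)[OF assms]])
    moreover have "trace_norm (normalized_rank_one x x' a) = 1"
      unfolding e trace_norm_scale[OF trace_class_rank_one(1)[OF assms]] trace_norm_rank_one[OF assms]
        norm_of_real using False pos by simp
    ultimately show ?thesis ..
  qed
  then show "trace_class (normalized_rank_one x x' a)" "trace_norm (normalized_rank_one x x' a) = 1"
    by auto
qed

lemma normalized_rank_one_tensor_entry:
  assumes x: "is_ell2 x" "is_ell2 x'" and y: "is_ell2 y" "is_ell2 y'"
  shows "complex_of_real (ell2_norm x * ell2_norm y * (ell2_norm x' * ell2_norm y')) * (normalized_rank_one x x' a s s' * normalized_rank_one y y' b t t')
     = (x s * y t) * cnj (x' s' * y' t')"
proof (cases "ell2_norm x * ell2_norm x' = 0 \<or> ell2_norm y * ell2_norm y' = 0")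
  case True
  then have "ell2_norm x = 0 \<or> ell2_norm x' = 0 \<or> ell2_norm y = 0 \<or> ell2_norm y' = 0" by auto
  then have "x s = 0 \<or> x' s' = 0 \<or> y t = 0 \<or> y' t' = 0"
    using ell2_norm_eq_0_imp[OF x(1)] ell2_norm_eq_0_imp[OF x(2)] ell2_norm_eq_0_imp[OF y(1)] ell2_norm_eq_0_imp[OF y(2)] by blast
  moreover have "ell2_norm x * ell2_norm y * (ell2_norm x' * ell2_norm y') = 0" using True by auto
  ultimately show ?thesis by auto
next
  case False
  then have nx: "ell2_norm x \<noteq> 0" "ell2_norm x' \<noteq> 0" and ny: "ell2_norm y \<noteq> 0" "ell2_norm y' \<noteq> 0" by auto
  show ?thesis using False nx ny unfolding normalized_rank_one_def by (simp add: field_simps)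
qed

section \<open>Positive matrices and density operators\<close>

definition positive_mat :: "('a \<Rightarrow> 'a \<Rightarrow> complex) \<Rightarrow> bool" where
  "positive_mat M \<longleftrightarrow> (\<forall>f. is_ell2 f \<longrightarrow> Im (cinner f (mat_apply M f)) = 0 \<and> Re (cinner f (mat_apply M f)) \<ge> 0)"

lemma density_op_positive: "density_op D \<Longrightarrow> positive_mat D"
  unfolding density_op_def positive_mat_def by blast

lemma density_op_bounded_mat: "density_op D \<Longrightarrow> bounded_mat D"
  unfolding density_op_def trace_class_def by blast

lemma density_op_trace_class: "density_op D \<Longrightarrow> trace_class D"
  unfolding density_op_def by simp

lemma cinner_mat_apply_add_scale:
  assumes M: "bounded_mat M" and f: "is_ell2 f" and g: "is_ell2 g"
  shows "cinner (\<lambda>x. f x + c * g x) (mat_apply M (\<lambda>x. f x + c * g x))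
     = cinner f (mat_apply M f) + c * cinner f (mat_apply M g) + cnj c * cinner g (mat_apply M f)
       + cnj c * c * cinner g (mat_apply M g)"
proof -
  have r: "ell2_rows M" by (rule bounded_mat_ell2_rows[OF M])
  have cg: "is_ell2 (\<lambda>x. c * g x)" by (rule is_ell2_scale[OF g])
  have Mf: "is_ell2 (mat_apply M f)" and Mg: "is_ell2 (mat_apply M g)"
    using is_ell2_mat_apply[OF M] f g by auto
  have cMg: "is_ell2 (\<lambda>x. c * mat_apply M g x)" by (rule is_ell2_scale[OF Mg])
  have ap: "mat_apply M (\<lambda>x. f x + c * g x) = (\<lambda>x. mat_apply M f x + c * mat_apply M g x)"
    using mat_apply_add[OF r f cg] by (simp add: mat_apply_scale)
  have s: "is_ell2 (\<lambda>x. mat_apply M f x + c * mat_apply M g x)" by (rule is_ell2_add[OF Mf cMg])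
  have "cinner (\<lambda>x. f x + c * g x) (\<lambda>x. mat_apply M f x + c * mat_apply M g x)
      = cinner f (\<lambda>x. mat_apply M f x + c * mat_apply M g x) + cinner (\<lambda>x. c * g x) (\<lambda>x. mat_apply M f x + c * mat_apply M g x)"
    by (rule cinner_add_left[OF s f cg])
  also have "\<dots> = (cinner f (mat_apply M f) + c * cinner f (mat_apply M g))
       + cnj c * (cinner g (mat_apply M f) + c * cinner g (mat_apply M g))"
    by (simp add: cinner_add_right[OF f Mf cMg] cinner_add_right[OF g Mf cMg] cinner_scale_left cinner_scale_right)
  finally show ?thesis unfolding ap by (simp add: algebra_simps)
qed

lemma positive_mat_form_real:
  assumes "positive_mat M" "is_ell2 f"
  shows "cinner f (mat_apply M f) = of_real (Re (cinner f (mat_apply M f)))"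
  using assms unfolding positive_mat_def by (simp add: complex_eq_iff)

lemma positive_mat_hermitian:
  assumes M: "bounded_mat M" and p: "positive_mat M" and f: "is_ell2 f" and g: "is_ell2 g"
  shows "cinner f (mat_apply M g) = cnj (cinner g (mat_apply M f))"
proof -
  define a where "a = cinner f (mat_apply M g)"
  define b where "b = cinner g (mat_apply M f)"
  have i1: "Im (cinner (\<lambda>x. f x + 1 * g x) (mat_apply M (\<lambda>x. f x + 1 * g x))) = 0"
    using p is_ell2_add[OF f is_ell2_scale[OF g]] unfolding positive_mat_def by blast
  have i2: "Im (cinner (\<lambda>x. f x + \<i> * g x) (mat_apply M (\<lambda>x. f x + \<i> * g x))) = 0"
    using p is_ell2_add[OF f is_ell2_scale[OF g]] unfolding positive_mat_def by blast
  have ff: "Im (cinner f (mat_apply M f)) = 0" and gg: "Im (cinner g (mat_apply M g)) = 0"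
    using p f g unfolding positive_mat_def by auto
  have "Im (a + b) = 0" using i1 ff gg unfolding cinner_mat_apply_add_scale[OF M f g] a_def b_def by simp
  moreover have "Re (a - b) = 0" using i2 ff gg unfolding cinner_mat_apply_add_scale[OF M f g] a_def b_def by simp
  ultimately show ?thesis unfolding a_def[symmetric] b_def[symmetric] by (simp add: complex_eq_iff)
qed

lemma cmod_power2_le_if_quadratic_nonneg:
  fixes c :: complex and a d :: real
  assumes a0: "a \<ge> 0" and d0: "d \<ge> 0" and key: "\<And>t. 0 \<le> d - 2 * Re (cnj t * c) + (cmod t)\<^sup>2 * a"
  shows "(cmod c)\<^sup>2 \<le> d * a"
proof -
  have cc: "cnj c * c = of_real ((cmod c)\<^sup>2)" by (simp only: complex_norm_square mult.commute)
  show ?thesis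
  proof (cases "a = 0")
    case True
    have "c = 0"
    proof (rule ccontr)
      assume "c \<noteq> 0"
      then have "Re (cnj (of_real ((d + 1) / (cmod c)\<^sup>2) * c) * c) = d + 1"
        by (simp add: mult.assoc cc del: of_real_power)
      then show False using key[of "of_real ((d + 1) / (cmod c)\<^sup>2) * c"] True d0 by simp
    qed
    then show ?thesis using True by simp
  next
    case False
    then have ap: "a > 0" using a0 by simp
    have r: "Re (cnj (of_real (1 / a) * c) * c) = (cmod c)\<^sup>2 / a"
      by (simp add: mult.assoc cc del: of_real_power)
    have n: "(cmod (of_real (1 / a) * c))\<^sup>2 * a = (cmod c)\<^sup>2 / a" using ap
      by (simp add: norm_mult norm_divide power_mult_distrib power2_eq_square)
    have "0 \<le> d - 2 * ((cmod c)\<^sup>2 / a) + (cmod c)\<^sup>2 / a"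
      using key[of "of_real (1 / a) * c"] unfolding r n .
    then show ?thesis using ap by (simp add: field_simps)
  qed
qed

lemma positive_mat_cauchy_schwarz:
  assumes M: "bounded_mat M" and p: "positive_mat M" and f: "is_ell2 f" and g: "is_ell2 g"
  shows "(cmod (cinner g (mat_apply M f)))\<^sup>2 \<le> Re (cinner g (mat_apply M g)) * Re (cinner f (mat_apply M f))"
proof -
  define a where "a = Re (cinner f (mat_apply M f))"
  define d where "d = Re (cinner g (mat_apply M g))"
  define c where "c = cinner g (mat_apply M f)"
  have cf: "cinner f (mat_apply M g) = cnj c" unfolding c_def by (rule positive_mat_hermitian[OF M p f g])
  have A: "cinner f (mat_apply M f) = of_real a" unfolding a_def by (rule positive_mat_form_real[OF p f])
  have D: "cinner g (mat_apply M g) = of_real d" unfolding d_def by (rule positive_mat_form_real[OF p g])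
  have "0 \<le> d - 2 * Re (cnj t * c) + (cmod t)\<^sup>2 * a" for t
  proof -
    have "0 \<le> Re (cinner (\<lambda>x. g x + (-cnj t) * f x) (mat_apply M (\<lambda>x. g x + (-cnj t) * f x)))"
      using p is_ell2_add[OF g is_ell2_scale[OF f]] unfolding positive_mat_def by blast
    also have "cinner (\<lambda>x. g x + (-cnj t) * f x) (mat_apply M (\<lambda>x. g x + (-cnj t) * f x))
       = of_real d - cnj t * c - t * cnj c + t * cnj t * of_real a"
      unfolding cinner_mat_apply_add_scale[OF M g f] cf A D c_def[symmetric] by (simp add: algebra_simps)
    also have "Re (of_real d - cnj t * c - t * cnj c + t * cnj t * of_real a) = d - 2 * Re (cnj t * c) + (cmod t)\<^sup>2 * a"
      by (simp add: complex_norm_square[symmetric] cmod_power2 algebra_simps power2_eq_square)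
    finally show ?thesis .
  qed
  moreover have "a \<ge> 0" "d \<ge> 0" using p f g unfolding positive_mat_def a_def d_def by auto
  ultimately have "(cmod c)\<^sup>2 \<le> d * a" using cmod_power2_le_if_quadratic_nonneg by blast
  then show ?thesis by (simp add: a_def d_def c_def)
qed

lemma rank_one_form:
  assumes "is_ell2 f" "is_ell2 p"
  shows "cinner f (mat_apply (\<lambda>x y. p x * cnj (p y)) f) = of_real ((cmod (cinner p f))\<^sup>2)"
proof -
  have "cinner f (mat_apply (\<lambda>x y. p x * cnj (p y)) f) = cinner f (\<lambda>x. cinner p f * p x)"
    by (simp add: mat_apply_rank_one mult.commute)
  also have "\<dots> = cinner p f * cinner f p" by (rule cinner_scale_right)
  also have "\<dots> = cinner p f * cnj (cinner p f)" by (simp add: cinner_commute[of f p])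
  finally show ?thesis by (simp only: complex_norm_square)
qed

lemma positive_mat_diag:
  assumes "bounded_mat M" "positive_mat M" shows "M x x = of_real (Re (M x x))" "Re (M x x) \<ge> 0"
proof -
  have "cinner (basis_vec x) (mat_apply M (basis_vec x)) = M x x"
    by (simp add: mat_apply_basis_vec cinner_basis_vec_left)
  then show "M x x = of_real (Re (M x x))" "Re (M x x) \<ge> 0"
    using assms(2) is_ell2_basis_vec[of x] unfolding positive_mat_def by (auto simp: complex_eq_iff)
qed

lemma positive_mat_trace_0:
  assumes B: "bounded_mat M" and P: "positive_mat M" and s: "(\<lambda>x. M x x) summable_on UNIV" and t: "trace M = 0"
  shows "M = (\<lambda>x y. 0)"
proof -
  have d: "M x x = 0" for x
  proof -
    have sr: "(\<lambda>x. Re (M x x)) summable_on UNIV" using summable_on_Re[OF s] by simp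
    have "(\<Sum>\<^sub>\<infinity>x. Re (M x x)) = Re (trace M)" unfolding trace_def using infsum_Re[OF s] by simp
    then have "(\<Sum>\<^sub>\<infinity>x. Re (M x x)) \<le> 0" using t by simp
    then have "Re (M x x) = 0"
      using nonneg_infsum_le_0D[of "\<lambda>x. Re (M x x)" UNIV x] sr positive_mat_diag(2)[OF B P] by blast
    then show ?thesis using positive_mat_diag(1)[OF B P, of x] by simp
  qed
  show ?thesis
  proof (intro ext)
    fix x y
    have "(cmod (cinner (basis_vec x) (mat_apply M (basis_vec y))))\<^sup>2
        \<le> Re (cinner (basis_vec x) (mat_apply M (basis_vec x))) * Re (cinner (basis_vec y) (mat_apply M (basis_vec y)))"
      by (rule positive_mat_cauchy_schwarz[OF B P is_ell2_basis_vec is_ell2_basis_vec])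
    then show "M x y = 0" by (simp add: mat_apply_basis_vec cinner_basis_vec_left d)
  qed
qed

lemma trace_lincomb:
  assumes "(\<lambda>x. A x x) summable_on UNIV" "(\<lambda>x. B x x) summable_on UNIV"
  shows "trace (\<lambda>x y. A x y + c * B x y) = trace A + c * trace B"
  unfolding trace_def using infsum_add[OF assms(1) summable_on_cmult_right[OF assms(2)]]
  by (simp add: infsum_cmult_right')

lemma rank_one_diag: "(\<lambda>x. p x * cnj (p x)) summable_on UNIV" "trace (\<lambda>x y. p x * cnj (p y)) = of_real (ell2_sqnorm p)"
  if "is_ell2 p"
proof -
  show "(\<lambda>x. p x * cnj (p x)) summable_on UNIV"
    using ell2_cnj_mult_summable[OF that that] by (simp add: mult.commute)
  show "trace (\<lambda>x y. p x * cnj (p y)) = of_real (ell2_sqnorm p)"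
    using cinner_self[of p] by (simp add: trace_def cinner_def mult.commute)
qed

lemma positive_mat_rank_one: "positive_mat (\<lambda>x y. p x * cnj (p y))" if "is_ell2 p"
  unfolding positive_mat_def using rank_one_form[OF _ that] by simp

lemma density_op_rank_one:
  assumes "is_ell2 u" "ell2_sqnorm u = 1"
  shows "density_op (\<lambda>x y. u x * cnj (u y))"
  unfolding density_op_def
  using positive_mat_rank_one[OF assms(1)] rank_one_diag(2)[OF assms(1)] assms(2) trace_class_rank_one(1)[OF assms(1) assms(1)]
  by (simp add: positive_mat_def)

lemma cinner_mat_apply_lincomb:
  assumes A: "bounded_mat A" and B: "bounded_mat B" and f: "is_ell2 f"
  shows "cinner f (mat_apply (\<lambda>x y. A x y + c * B x y) f) = cinner f (mat_apply A f) + c * cinner f (mat_apply B f)"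
proof -
  have Af: "is_ell2 (mat_apply A f)" and Bf: "is_ell2 (mat_apply B f)" using A B f is_ell2_mat_apply by auto
  have "mat_apply (\<lambda>x y. A x y + c * B x y) f = (\<lambda>x. mat_apply A f x + c * mat_apply B f x)"
    using mat_apply_add_mat[OF bounded_mat_ell2_rows[OF A] ell2_rows_scale[OF bounded_mat_ell2_rows[OF B]] f]
    by (simp add: mat_apply_scale_mat)
  then show ?thesis using cinner_add_right[OF f Af is_ell2_scale[OF Bf]] by (simp add: cinner_scale_right)
qed

lemma density_op_diag_summable: "density_op D \<Longrightarrow> (\<lambda>x. D x x) summable_on UNIV"
  unfolding density_op_def trace_def using infsum_not_exists by fastforce

lemma positive_mat_apply_eq_0:
  assumes M: "bounded_mat M" and P: "positive_mat M" and f: "is_ell2 f"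
    and form: "Re (cinner f (mat_apply M f)) = 0"
  shows "mat_apply M f = (\<lambda>x. 0)"
proof
  fix x
  have "(cmod (cinner (basis_vec x) (mat_apply M f)))\<^sup>2
      \<le> Re (cinner (basis_vec x) (mat_apply M (basis_vec x))) * Re (cinner f (mat_apply M f))"
    by (rule positive_mat_cauchy_schwarz[OF M P f is_ell2_basis_vec])
  then show "mat_apply M f x = 0" using form by (simp add: cinner_basis_vec_left)
qed

text \<open>The columns of \<open>M\<close> lie along \<open>M \<psi>\<close>, and by hermiticity \<open>M \<psi>\<close> lies along \<open>\<psi>\<close>.\<close>

lemma positive_mat_eq_rank_one:
  assumes M: "bounded_mat M" and P: "positive_mat M"
    and psi: "is_ell2 \<psi>" "ell2_sqnorm \<psi> = 1"
    and kill: "\<And>f. is_ell2 f \<Longrightarrow> cinner \<psi> f = 0 \<Longrightarrow> mat_apply M f = (\<lambda>x. 0)"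
  shows "M x y = cinner \<psi> (mat_apply M \<psi>) * (\<psi> x * cnj (\<psi> y))"
proof -
  define m where "m = cinner \<psi> (mat_apply M \<psi>)"
  have R: "ell2_rows M" by (rule bounded_mat_ell2_rows[OF M])
  have col: "M x y = cnj (\<psi> y) * mat_apply M \<psi> x" for x y
  proof -
    define h where "h = (\<lambda>z. basis_vec y z - cnj (\<psi> y) * \<psi> z)"
    have sc: "is_ell2 (\<lambda>z. cnj (\<psi> y) * \<psi> z)" by (rule is_ell2_scale[OF psi(1)])
    have h2: "is_ell2 h" unfolding h_def by (rule is_ell2_diff[OF is_ell2_basis_vec sc])
    have "cinner \<psi> h = cinner \<psi> (basis_vec y) - cinner \<psi> (\<lambda>z. cnj (\<psi> y) * \<psi> z)"
      unfolding h_def by (rule cinner_diff_right[OF psi(1) is_ell2_basis_vec sc])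
    also have "\<dots> = 0" using psi by (simp add: cinner_basis_vec_right cinner_scale_right cinner_self)
    finally have "mat_apply M h = (\<lambda>x. 0)" using kill[OF h2] by simp
    moreover have "mat_apply M h = (\<lambda>x. mat_apply M (basis_vec y) x - mat_apply M (\<lambda>z. cnj (\<psi> y) * \<psi> z) x)"
      unfolding h_def by (rule mat_apply_diff[OF R is_ell2_basis_vec sc])
    ultimately have "mat_apply M (basis_vec y) x = mat_apply M (\<lambda>z. cnj (\<psi> y) * \<psi> z) x"
      by (metis right_minus_eq)
    then show ?thesis by (simp add: mat_apply_basis_vec mat_apply_scale)
  qed
  have "mat_apply M \<psi> x = \<psi> x * cnj m" for x
  proof -
    have "mat_apply M \<psi> x = cinner (basis_vec x) (mat_apply M \<psi>)"
      by (simp add: cinner_basis_vec_left)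
    also have "\<dots> = cnj (cinner \<psi> (mat_apply M (basis_vec x)))"
      by (rule positive_mat_hermitian[OF M P is_ell2_basis_vec psi(1)])
    also have "cinner \<psi> (mat_apply M (basis_vec x)) = cnj (\<psi> x) * m"
      by (simp add: mat_apply_basis_vec col cinner_scale_right m_def)
    finally show ?thesis by simp
  qed
  moreover have "cnj m = m"
    using positive_mat_form_real[OF P psi(1)] unfolding m_def by (metis complex_cnj_complex_of_real)
  ultimately show ?thesis using col by (simp add: m_def algebra_simps)
qed

lemma rank_one_proj_convex_split:
  fixes D1 D2 :: "'a \<Rightarrow> 'a \<Rightarrow> complex"
  assumes d1: "density_op D1" and d2: "density_op D2" and t: "0 < t" "t < 1"
    and psi: "is_ell2 \<psi>" "ell2_sqnorm \<psi> = 1"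
    and eq: "(\<lambda>x y. \<psi> x * cnj (\<psi> y)) = (\<lambda>x y. complex_of_real t * D1 x y + complex_of_real (1 - t) * D2 x y)"
  shows "D1 = (\<lambda>x y. \<psi> x * cnj (\<psi> y))"
proof -
  have B1: "bounded_mat D1" and B2: "bounded_mat D2" using d1 d2 by (auto intro: density_op_bounded_mat)
  have P1: "positive_mat D1" and P2: "positive_mat D2" using d1 d2 by (auto intro: density_op_positive)
  have kill: "mat_apply D1 f = (\<lambda>x. 0)" if f: "is_ell2 f" and orth: "cinner \<psi> f = 0" for f
  proof (rule positive_mat_apply_eq_0[OF B1 P1 f])
    have D1f: "is_ell2 (mat_apply D1 f)" and D2f: "is_ell2 (mat_apply D2 f)"
      using is_ell2_mat_apply B1 B2 f by auto
    have ap: "mat_apply (\<lambda>x y. \<psi> x * cnj (\<psi> y)) f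
       = (\<lambda>x. complex_of_real t * mat_apply D1 f x + complex_of_real (1 - t) * mat_apply D2 f x)"
      unfolding eq using mat_apply_add_mat[OF ell2_rows_scale ell2_rows_scale f] B1 B2
      by (simp add: mat_apply_scale_mat bounded_mat_ell2_rows)
    have "cinner f (mat_apply (\<lambda>x y. \<psi> x * cnj (\<psi> y)) f)
       = complex_of_real t * cinner f (mat_apply D1 f) + complex_of_real (1 - t) * cinner f (mat_apply D2 f)"
      unfolding ap using cinner_add_right[OF f is_ell2_scale[OF D1f] is_ell2_scale[OF D2f]]
      by (simp add: cinner_scale_right)
    then have "complex_of_real t * cinner f (mat_apply D1 f) + complex_of_real (1 - t) * cinner f (mat_apply D2 f) = 0"
      using rank_one_form[OF f psi(1)] orth by simp
    from arg_cong[where f=Re, OF this]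
    have "t * Re (cinner f (mat_apply D1 f)) + (1 - t) * Re (cinner f (mat_apply D2 f)) = 0" by simp
    moreover have "Re (cinner f (mat_apply D1 f)) \<ge> 0" "Re (cinner f (mat_apply D2 f)) \<ge> 0"
      using P1 P2 f unfolding positive_mat_def by auto
    ultimately show "Re (cinner f (mat_apply D1 f)) = 0" using t
      by (smt (verit, best) mult_pos_pos mult_nonneg_nonneg)
  qed
  have D1: "D1 x y = cinner \<psi> (mat_apply D1 \<psi>) * (\<psi> x * cnj (\<psi> y))" for x y
    by (rule positive_mat_eq_rank_one[OF B1 P1 psi kill])
  have "trace D1 = (\<Sum>\<^sub>\<infinity>x. cinner \<psi> (mat_apply D1 \<psi>) * (cnj (\<psi> x) * \<psi> x))"
    unfolding trace_def by (rule infsum_cong) (subst D1, simp)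
  also have "\<dots> = cinner \<psi> (mat_apply D1 \<psi>) * cinner \<psi> \<psi>"
    unfolding cinner_def by (rule infsum_cmult_right')
  finally have "trace D1 = cinner \<psi> (mat_apply D1 \<psi>) * cinner \<psi> \<psi>" .
  then have "cinner \<psi> (mat_apply D1 \<psi>) = 1" using d1 psi by (simp add: density_op_def cinner_self)
  then show ?thesis using D1 by (intro ext) simp
qed

lemma Re_trace_positive_mat_nonneg:
  assumes B: "bounded_mat N" and P: "positive_mat N" and s: "(\<lambda>x. N x x) summable_on UNIV"
  shows "Re (trace N) \<ge> 0"
proof -
  have "Re (trace N) = (\<Sum>\<^sub>\<infinity>x. Re (N x x))" unfolding trace_def using infsum_Re[OF s] by simp
  also have "\<dots> \<ge> 0" by (rule infsum_nonneg) (use positive_mat_diag(2)[OF B P] in auto)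
  finally show ?thesis .
qed

lemma density_op_normalize:
  assumes T: "trace_class N" and P: "positive_mat N" and tr: "trace N = complex_of_real s" and s: "s > 0"
  shows "density_op (\<lambda>x y. complex_of_real (1 / s) * N x y)"
  unfolding density_op_def
proof (intro conjI allI impI)
  show "trace_class (\<lambda>x y. complex_of_real (1 / s) * N x y)" by (rule trace_class_scale(1)[OF T])
next
  fix f :: "'a \<Rightarrow> complex" assume f: "is_ell2 f"
  have e: "cinner f (mat_apply (\<lambda>x y. complex_of_real (1 / s) * N x y) f)
      = complex_of_real (1 / s) * cinner f (mat_apply N f)"
    by (simp only: mat_apply_scale_mat cinner_scale_right)
  show "Im (cinner f (mat_apply (\<lambda>x y. complex_of_real (1 / s) * N x y) f)) = 0"
    using P f unfolding e positive_mat_def by simp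
  show "Re (cinner f (mat_apply (\<lambda>x y. complex_of_real (1 / s) * N x y) f)) \<ge> 0"
    using P f s unfolding e positive_mat_def by simp
next
  have "trace (\<lambda>x y. complex_of_real (1 / s) * N x y) = complex_of_real (1 / s) * trace N"
    unfolding trace_def by (rule infsum_cmult_right')
  then show "trace (\<lambda>x y. complex_of_real (1 / s) * N x y) = 1" using tr s by simp
qed

text \<open>For the column \<open>\<phi> = D e\<^sub>z\<close>, the bound \<open>|\<langle>\<phi>, f\<rangle>|\<^sup>2 \<le> D z z \<langle>f, D f\<rangle>\<close> is the
  Cauchy-Schwarz inequality for the form of \<open>D\<close>.\<close>

lemma positive_mat_minus_column_proj:
  assumes B: "bounded_mat D" and P: "positive_mat D" and a: "D z z = complex_of_real a" "a > 0"
  shows "positive_mat (\<lambda>x y. D x y + complex_of_real (- (1 / a)) * (D x z * cnj (D y z)))"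
proof -
  define \<phi> where "\<phi> = (\<lambda>x. D x z)"
  have phiD: "\<phi> = mat_apply D (basis_vec z)" by (simp add: mat_apply_basis_vec \<phi>_def)
  have phi2: "is_ell2 \<phi>" unfolding phiD by (rule is_ell2_mat_apply[OF B is_ell2_basis_vec])
  have csb: "(cmod (cinner \<phi> f))\<^sup>2 \<le> a * Re (cinner f (mat_apply D f))" if f: "is_ell2 f" for f
  proof -
    have "cinner \<phi> f = cnj (cinner f (mat_apply D (basis_vec z)))" by (simp add: phiD cinner_commute[of _ f])
    also have "cinner f (mat_apply D (basis_vec z)) = cnj (cinner (basis_vec z) (mat_apply D f))"
      by (rule positive_mat_hermitian[OF B P f is_ell2_basis_vec])
    finally have "cinner \<phi> f = cinner (basis_vec z) (mat_apply D f)" by simp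
    moreover have "(cmod (cinner (basis_vec z) (mat_apply D f)))\<^sup>2
        \<le> Re (cinner (basis_vec z) (mat_apply D (basis_vec z))) * Re (cinner f (mat_apply D f))"
      by (rule positive_mat_cauchy_schwarz[OF B P f is_ell2_basis_vec])
    ultimately show ?thesis using a by (simp add: mat_apply_basis_vec cinner_basis_vec_left)
  qed
  have BR: "bounded_mat (\<lambda>x y. \<phi> x * cnj (\<phi> y))"
    by (rule trace_class_bounded_mat[OF trace_class_rank_one(1)[OF phi2 phi2]])
  have "positive_mat (\<lambda>x y. D x y + complex_of_real (- (1 / a)) * (\<phi> x * cnj (\<phi> y)))"
    unfolding positive_mat_def
  proof (intro allI impI)
    fix f :: "'a \<Rightarrow> complex" assume f: "is_ell2 f"
    have "cinner f (mat_apply (\<lambda>x y. D x y + complex_of_real (- (1 / a)) * (\<phi> x * cnj (\<phi> y))) f)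
        = cinner f (mat_apply D f) - of_real ((cmod (cinner \<phi> f))\<^sup>2 / a)"
      unfolding cinner_mat_apply_lincomb[OF B BR f] rank_one_form[OF f phi2]
      by (simp add: of_real_divide)
    moreover have "Im (cinner f (mat_apply D f)) = 0" "Re (cinner f (mat_apply D f)) \<ge> 0"
      using P f by (auto simp: positive_mat_def)
    moreover have "(cmod (cinner \<phi> f))\<^sup>2 / a \<le> Re (cinner f (mat_apply D f))"
      using csb[OF f] a by (simp add: field_simps mult.commute)
    ultimately show "Im (cinner f (mat_apply (\<lambda>x y. D x y + complex_of_real (- (1 / a)) * (\<phi> x * cnj (\<phi> y))) f)) = 0
        \<and> 0 \<le> Re (cinner f (mat_apply (\<lambda>x y. D x y + complex_of_real (- (1 / a)) * (\<phi> x * cnj (\<phi> y))) f))"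
      by simp
  qed
  then show ?thesis by (simp add: \<phi>_def)
qed

lemma density_op_minus_column_proj:
  assumes d: "density_op D" and a: "D z z = complex_of_real a" "a > 0"
  defines "N \<equiv> (\<lambda>x y. D x y + complex_of_real (- (1 / a)) * (D x z * cnj (D y z)))"
  shows "trace_class N" "positive_mat N" "(\<lambda>x. N x x) summable_on UNIV"
    and "trace N = complex_of_real (1 - ell2_sqnorm (\<lambda>x. D x z) / a)"
proof -
  have B: "bounded_mat D" and P: "positive_mat D" and T: "trace_class D" and tr: "trace D = 1"
    and ds: "(\<lambda>x. D x x) summable_on UNIV"
    using d by (auto intro: density_op_bounded_mat density_op_positive density_op_diag_summable
        simp: density_op_def)
  have phi2: "is_ell2 (\<lambda>x. D x z)" by (rule column_le_trace_norm(1)[OF T])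
  show "trace_class N" unfolding N_def
    by (rule trace_class_lincomb(1)[OF T trace_class_rank_one(1)[OF phi2 phi2]])
  show "positive_mat N" unfolding N_def by (rule positive_mat_minus_column_proj[OF B P a])
  have Rs: "(\<lambda>x. D x z * cnj (D x z)) summable_on UNIV" by (rule rank_one_diag(1)[OF phi2])
  show "(\<lambda>x. N x x) summable_on UNIV" unfolding N_def
    by (rule summable_on_add[OF ds summable_on_cmult_right[OF Rs]])
  have "trace N = trace D + complex_of_real (- (1 / a)) * trace (\<lambda>x y. D x z * cnj (D y z))"
    unfolding N_def by (rule trace_lincomb[where A=D and B="\<lambda>x y. D x z * cnj (D y z)", OF ds Rs])
  then show "trace N = complex_of_real (1 - ell2_sqnorm (\<lambda>x. D x z) / a)"
    unfolding rank_one_diag(2)[OF phi2] tr by simp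
qed

lemma density_op_split_rank_one:
  fixes D :: "'a \<Rightarrow> 'a \<Rightarrow> complex"
  assumes d: "density_op D" and not_pure: "D \<notin> rank_one_projs"
  obtains z c lam D2 where "c > 0" "0 < lam" "lam < 1" "density_op D2"
    "is_ell2 (\<lambda>x. complex_of_real c * D x z)" "ell2_sqnorm (\<lambda>x. complex_of_real c * D x z) = 1"
    "D = (\<lambda>x y. complex_of_real lam * ((complex_of_real c * D x z) * cnj (complex_of_real c * D y z))
                 + complex_of_real (1 - lam) * D2 x y)"
proof -
  have B: "bounded_mat D" and P: "positive_mat D"
    using d by (auto intro: density_op_bounded_mat density_op_positive)
  obtain z where z: "D z z \<noteq> 0"
    using d by (force simp: density_op_def trace_def)
  define a where "a = Re (D z z)"
  have Dzz: "D z z = of_real a" unfolding a_def by (rule positive_mat_diag(1)[OF B P])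
  moreover have "a \<ge> 0" using positive_mat_diag(2)[OF B P, of z] by (simp add: a_def)
  ultimately have a: "a > 0" using z by (auto simp: less_le)
  define \<phi> where "\<phi> = (\<lambda>x. D x z)"
  have phi2: "is_ell2 \<phi>"
    unfolding \<phi>_def by (rule column_le_trace_norm(1)[OF density_op_trace_class[OF d]])
  define N where "N = (\<lambda>x y. D x y + complex_of_real (- (1 / a)) * (D x z * cnj (D y z)))"
  define lam where "lam = ell2_sqnorm \<phi> / a"
  have TN: "trace_class N" and PN: "positive_mat N" and Ns: "(\<lambda>x. N x x) summable_on UNIV"
    and trN: "trace N = of_real (1 - lam)"
    using density_op_minus_column_proj[OF d Dzz a] unfolding N_def lam_def \<phi>_def by auto
  have lam1: "lam \<le> 1"
    using Re_trace_positive_mat_nonneg[OF trace_class_bounded_mat[OF TN] PN Ns] trN by simp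
  have np: "ell2_norm \<phi> > 0"
    using ell2_norm_eq_0_imp[OF phi2, of z] ell2_norm_nonneg[of \<phi>] z by (force simp: \<phi>_def)
  then have lam0: "lam > 0" unfolding lam_def using a by (simp add: ell2_norm_power2[symmetric])
  define c where "c = 1 / ell2_norm \<phi>"
  define u where "u = (\<lambda>x. complex_of_real c * D x z)"
  have u2: "is_ell2 u" and nu: "ell2_sqnorm u = 1"
    using ell2_normalize(1,2)[OF phi2 np] unfolding u_def c_def \<phi>_def by auto
  have N_eq: "N x y = D x y - complex_of_real lam * (u x * cnj (u y))" for x y
  proof -
    have "complex_of_real lam * (u x * cnj (u y)) = complex_of_real (lam * c * c) * (D x z * cnj (D y z))"
      by (simp add: u_def)
    also have "lam * c * c = 1 / a" unfolding lam_def c_def using np a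
      by (simp add: ell2_norm_power2[symmetric] power2_eq_square)
    finally show ?thesis by (simp add: N_def)
  qed
  have "lam \<noteq> 1"
  proof
    assume "lam = 1"
    then have "N = (\<lambda>x y. 0)"
      using positive_mat_trace_0[OF trace_class_bounded_mat[OF TN] PN Ns] trN by simp
    then have "D = (\<lambda>x y. u x * cnj (u y))" using \<open>lam = 1\<close> N_eq by (simp add: fun_eq_iff)
    then show False
      using not_pure u2 nu by (auto simp: rank_one_projs_def ell2_norm_eq_sqrt)
  qed
  with lam1 have lam_lt: "lam < 1" by simp
  define D2 where "D2 = (\<lambda>x y. complex_of_real (1 / (1 - lam)) * N x y)"
  have "density_op D2" unfolding D2_def
    by (rule density_op_normalize[OF TN PN trN]) (use lam_lt in simp)
  moreover have "D = (\<lambda>x y. complex_of_real lam * (u x * cnj (u y)) + complex_of_real (1 - lam) * D2 x y)"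
    using lam_lt by (intro ext) (simp add: D2_def N_eq)
  moreover have "c > 0" unfolding c_def using np by simp
  ultimately show ?thesis using that lam0 lam_lt u2 nu unfolding u_def by blast
qed

section \<open>Cross expansions\<close>

definition cross_partial_sum :: "(nat \<Rightarrow> real) \<Rightarrow> (nat \<Rightarrow> 'a \<Rightarrow> 'a \<Rightarrow> complex) \<Rightarrow>
    (nat \<Rightarrow> 'b \<Rightarrow> 'b \<Rightarrow> complex) \<Rightarrow> nat \<Rightarrow> ('a \<times> 'b \<Rightarrow> 'a \<times> 'b \<Rightarrow> complex)" where
  "cross_partial_sum r X Y n = (\<lambda>u v. \<Sum>k<n. complex_of_real (r k) * tensor_op (X k) (Y k) u v)"

definition cross_expansion :: "('a \<times> 'b \<Rightarrow> 'a \<times> 'b \<Rightarrow> complex) \<Rightarrow> (nat \<Rightarrow> real) \<Rightarrow>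
    (nat \<Rightarrow> 'a \<Rightarrow> 'a \<Rightarrow> complex) \<Rightarrow> (nat \<Rightarrow> 'b \<Rightarrow> 'b \<Rightarrow> complex) \<Rightarrow> bool" where
  "cross_expansion D r X Y \<longleftrightarrow> (\<forall>k. r k \<ge> 0) \<and> summable r \<and>
        (\<forall>k. trace_class (X k) \<and> trace_class (Y k) \<and> trace_norm (X k) * trace_norm (Y k) = 1) \<and>
        (\<lambda>n. trace_norm (\<lambda>u v. D u v - cross_partial_sum r X Y n u v)) \<longlonglongrightarrow> 0"

lemma cross_states_iff: "D \<in> cross_states \<longleftrightarrow> density_op D \<and> (\<exists>r X Y. cross_expansion D r X Y)"
  unfolding cross_states_def cross_expansion_def cross_partial_sum_def by simp

lemma cross_partial_sum_0: "cross_partial_sum r X Y 0 = (\<lambda>u v. 0)"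
  by (simp add: cross_partial_sum_def)

lemma cross_partial_sum_Suc:
  "cross_partial_sum r X Y (Suc n)
    = (\<lambda>u v. cross_partial_sum r X Y n u v + complex_of_real (r n) * tensor_op (X n) (Y n) u v)"
  by (simp add: cross_partial_sum_def)

lemma tensor_op_scale_left: "tensor_op (\<lambda>x y. c * X x y) Y = (\<lambda>u v. c * tensor_op X Y u v)"
  by (auto simp: tensor_op_def fun_eq_iff)

lemma tensor_op_uminus_left: "tensor_op (\<lambda>s s'. - X s s') Y = (\<lambda>u v. - tensor_op X Y u v)"
  by (auto simp: tensor_op_def fun_eq_iff)

lemma ell2_rows_cross_partial_sum:
  assumes "\<And>k. trace_class (X k)" "\<And>k. trace_class (Y k)"
  shows "ell2_rows (cross_partial_sum r X Y n)"
  unfolding cross_partial_sum_def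
  by (rule ell2_rows_sum, rule ell2_rows_scale, rule ell2_rows_tensor_op)
     (use assms in \<open>auto simp: trace_class_iff\<close>)

lemma trace_class_cross_partial_sum:
  assumes "\<And>k. trace_class (tensor_op (X k) (Y k))"
  shows "trace_class (cross_partial_sum r X Y n)"
proof (induction n)
  case (Suc n)
  then show ?case unfolding cross_partial_sum_Suc by (rule trace_class_lincomb(1)[OF _ assms])
qed (simp add: cross_partial_sum_0 trace_class_zero)

text \<open>A matrix that is not trace class has the junk trace norm \<open>Sup (UNIV :: real set)\<close>, and
  \<^const>\<open>cross_states\<close> only asks the trace norms of the remainders to tend to \<open>0\<close>.  So the
  remainders are eventually trace class unless that junk value is \<open>0\<close> and some tensor product of
  trace-class matrices is not trace class.  That case cannot occur, but rather than proving this we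
  note that then every density operator is a cross state, with a one-term expansion.\<close>

lemma trace_class_if_trace_norm_ne_Sup:
  assumes "ell2_rows M" "trace_norm M \<noteq> Sup (UNIV :: real set)"
  shows "trace_class M"
  using assms trace_norm_not_bdd[of M] unfolding trace_class_iff by metis

lemma cross_remainder_eventually_trace_class:
  fixes D :: "'a \<times> 'b \<Rightarrow> 'a \<times> 'b \<Rightarrow> complex"
  assumes e: "cross_expansion D r X Y" and d: "density_op D"
    and h: "Sup (UNIV :: real set) \<noteq> 0 \<or> (\<forall>(X::'a \<Rightarrow> 'a \<Rightarrow> complex) (Y::'b \<Rightarrow> 'b \<Rightarrow> complex).
              trace_class X \<longrightarrow> trace_class Y \<longrightarrow> trace_class (tensor_op X Y))"
  shows "\<exists>N0. \<forall>n\<ge>N0. trace_class (\<lambda>u v. D u v - cross_partial_sum r X Y n u v)"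
proof -
  have tc: "\<And>k. trace_class (X k)" "\<And>k. trace_class (Y k)" using e by (auto simp: cross_expansion_def)
  show ?thesis
  proof (cases "Sup (UNIV :: real set) = 0")
    case False
    have "(\<lambda>n. trace_norm (\<lambda>u v. D u v - cross_partial_sum r X Y n u v)) \<longlonglongrightarrow> 0"
      using e by (simp add: cross_expansion_def)
    from tendstoD[OF this, of "\<bar>Sup (UNIV :: real set)\<bar>"] False
    obtain N0 where N0: "\<And>n. n \<ge> N0 \<Longrightarrow>
        \<bar>trace_norm (\<lambda>u v. D u v - cross_partial_sum r X Y n u v)\<bar> < \<bar>Sup (UNIV :: real set)\<bar>"
      unfolding eventually_sequentially by auto
    have rows: "ell2_rows (\<lambda>u v. D u v - cross_partial_sum r X Y n u v)" for n
      using ell2_rows_lincomb[OF bounded_mat_ell2_rows[OF density_op_bounded_mat[OF d]]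
          ell2_rows_cross_partial_sum[OF tc], of "-1"] by simp
    have "trace_class (\<lambda>u v. D u v - cross_partial_sum r X Y n u v)" if "n \<ge> N0" for n
      using N0[OF that] by (intro trace_class_if_trace_norm_ne_Sup[OF rows]) auto
    then show ?thesis by blast
  next
    case True
    then have "trace_class (tensor_op (X k) (Y k))" for k using h by (simp add: tc)
    then have "trace_class (\<lambda>u v. D u v - cross_partial_sum r X Y n u v)" for n
      by (rule trace_class_diff(1)[OF density_op_trace_class[OF d] trace_class_cross_partial_sum])
    then show ?thesis by blast
  qed
qed

lemma normalize_tensor_not_trace_class:
  fixes X0 :: "'a \<Rightarrow> 'a \<Rightarrow> complex" and Y0 :: "'b \<Rightarrow> 'b \<Rightarrow> complex"
  assumes X0: "trace_class X0" and Y0: "trace_class Y0" and nt: "\<not> trace_class (tensor_op X0 Y0)"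
  obtains X1 :: "'a \<Rightarrow> 'a \<Rightarrow> complex" where "trace_class X1" "trace_norm X1 * trace_norm Y0 = 1"
    "\<not> trace_class (tensor_op X1 Y0)"
proof -
  have "X0 = (\<lambda>x y. 0) \<or> Y0 = (\<lambda>x y. 0) \<Longrightarrow> tensor_op X0 Y0 = (\<lambda>u v. 0)"
    by (auto simp: tensor_op_def fun_eq_iff)
  then have "X0 \<noteq> (\<lambda>x y. 0)" "Y0 \<noteq> (\<lambda>x y. 0)" using nt trace_class_zero by auto
  then obtain a a' b b' where "X0 a a' \<noteq> 0" "Y0 b b' \<noteq> 0" by (meson ext)
  then have px: "trace_norm X0 > 0" and py: "trace_norm Y0 > 0"
    using trace_norm_pos_if_entry_nonzero[OF X0] trace_norm_pos_if_entry_nonzero[OF Y0] by auto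
  define \<kappa> where "\<kappa> = 1 / (trace_norm X0 * trace_norm Y0)"
  have kp: "\<kappa> > 0" unfolding \<kappa>_def using px py by simp
  show ?thesis
  proof (rule that[of "\<lambda>x y. complex_of_real \<kappa> * X0 x y"])
    show "trace_class (\<lambda>x y. complex_of_real \<kappa> * X0 x y)" by (rule trace_class_scale(1)[OF X0])
    have "trace_norm (\<lambda>x y. complex_of_real \<kappa> * X0 x y) = \<kappa> * trace_norm X0"
      unfolding trace_norm_scale[OF X0] using kp by simp
    then show "trace_norm (\<lambda>x y. complex_of_real \<kappa> * X0 x y) * trace_norm Y0 = 1"
      using px py by (simp add: \<kappa>_def)
    have "tensor_op (\<lambda>x y. complex_of_real \<kappa> * X0 x y) Y0 = (\<lambda>u v. complex_of_real \<kappa> * tensor_op X0 Y0 u v)"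
      by (rule tensor_op_scale_left)
    then show "\<not> trace_class (tensor_op (\<lambda>x y. complex_of_real \<kappa> * X0 x y) Y0)"
      using nt trace_class_scale_iff[of "complex_of_real \<kappa>" "tensor_op X0 Y0"] kp by simp
  qed
qed

lemma density_op_cross_if_tensor_not_trace_class:
  fixes X0 :: "'a \<Rightarrow> 'a \<Rightarrow> complex" and Y0 :: "'b \<Rightarrow> 'b \<Rightarrow> complex"
    and D :: "'a \<times> 'b \<Rightarrow> 'a \<times> 'b \<Rightarrow> complex"
  assumes junk: "Sup (UNIV :: real set) = 0" and X0: "trace_class X0" and Y0: "trace_class Y0"
    and nt: "\<not> trace_class (tensor_op X0 Y0)" and d: "density_op D"
  shows "D \<in> cross_states"
proof -
  obtain X1 :: "'a \<Rightarrow> 'a \<Rightarrow> complex" where X1: "trace_class X1" "trace_norm X1 * trace_norm Y0 = 1"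
    and nt1: "\<not> trace_class (tensor_op X1 Y0)"
    using normalize_tensor_not_trace_class[OF X0 Y0 nt] .
  define r where "r = (\<lambda>k::nat. if k = 0 then 1 else (0::real))"
  have ps: "cross_partial_sum r (\<lambda>_. X1) (\<lambda>_. Y0) n = tensor_op X1 Y0" if "n \<ge> 1" for n
  proof -
    have "cross_partial_sum r (\<lambda>_. X1) (\<lambda>_. Y0) n
        = (\<lambda>u v. \<Sum>k\<in>{0}. complex_of_real (r k) * tensor_op X1 Y0 u v)"
      unfolding cross_partial_sum_def using that by (intro ext sum.mono_neutral_right) (auto simp: r_def)
    then show ?thesis by (simp add: r_def)
  qed
  have "trace_norm (\<lambda>u v. D u v - cross_partial_sum r (\<lambda>_. X1) (\<lambda>_. Y0) n u v) = 0" if "n \<ge> 1" for n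
  proof -
    have "\<not> trace_class (\<lambda>u v. D u v - tensor_op X1 Y0 u v)"
      using trace_class_diff(1)[OF density_op_trace_class[OF d]] nt1 by fastforce
    then show ?thesis
      using ps[OF that] junk trace_norm_not_bdd ell2_rows_lincomb[OF _ ell2_rows_tensor_op, of D X1 Y0 "-1"]
        d X1(1) Y0 by (force simp: trace_class_iff density_op_def)
  qed
  then have "cross_expansion D r (\<lambda>_. X1) (\<lambda>_. Y0)"
    unfolding cross_expansion_def using X1 Y0
    by (auto simp: r_def intro: summable_finite[of "{0}"] tendsto_eventually eventually_sequentiallyI)
  then show ?thesis using d cross_states_iff by blast
qed

text \<open>With \<open>x\<^sub>k = X\<^sub>k e\<^sub>a\<close> and \<open>y\<^sub>k = Y\<^sub>k e\<^sub>b\<close>, the column of \<open>D = \<Sum>\<^sub>k r\<^sub>k X\<^sub>k \<otimes> Y\<^sub>k\<close> at \<open>(a, b)\<close> is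
  \<open>\<Sum>\<^sub>k r\<^sub>k x\<^sub>k \<otimes> y\<^sub>k\<close>, so its rank-one matrix is the double series with terms
  \<open>r\<^sub>k r\<^sub>l (x\<^sub>k x\<^sub>l\<^sup>*) \<otimes> (y\<^sub>k y\<^sub>l\<^sup>*)\<close>, re-indexed by \<^const>\<open>prod_decode\<close>.\<close>

context
  fixes D :: "'a \<times> 'b \<Rightarrow> 'a \<times> 'b \<Rightarrow> complex" and r :: "nat \<Rightarrow> real"
    and X :: "nat \<Rightarrow> 'a \<Rightarrow> 'a \<Rightarrow> complex" and Y :: "nat \<Rightarrow> 'b \<Rightarrow> 'b \<Rightarrow> complex"
    and N0 :: nat and a :: 'a and b :: 'b and c :: real
  assumes d: "density_op D" and e: "cross_expansion D r X Y"
    and N0: "\<And>n. n \<ge> N0 \<Longrightarrow> trace_class (\<lambda>u v. D u v - cross_partial_sum r X Y n u v)"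
    and c: "c > 0"
begin

definition col_X :: "nat \<Rightarrow> 'a \<Rightarrow> complex" where
  "col_X k = (\<lambda>s. X k s a)"
definition col_Y :: "nat \<Rightarrow> 'b \<Rightarrow> complex" where
  "col_Y k = (\<lambda>t. Y k t b)"
definition col_term :: "nat \<Rightarrow> 'a \<times> 'b \<Rightarrow> complex" where
  "col_term k = (\<lambda>w. complex_of_real (c * r k) * (col_X k (fst w) * col_Y k (snd w)))"
definition scaled_col :: "'a \<times> 'b \<Rightarrow> complex" where
  "scaled_col = (\<lambda>w. complex_of_real c * D w (a, b))"

lemma expansion_terms: "r k \<ge> 0" "summable r" "trace_class (X k)" "trace_class (Y k)" "trace_norm (X k) * trace_norm (Y k) = 1"
  using e by (auto simp: cross_expansion_def)

lemma col_X_le_trace_norm: "is_ell2 (col_X k)" "ell2_norm (col_X k) \<le> trace_norm (X k)"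
  using column_le_trace_norm[OF expansion_terms(3)] by (auto simp: col_X_def)

lemma col_Y_le_trace_norm: "is_ell2 (col_Y k)" "ell2_norm (col_Y k) \<le> trace_norm (Y k)"
  using column_le_trace_norm[OF expansion_terms(4)] by (auto simp: col_Y_def)

lemma col_term_tensor: "(\<lambda>w. col_X k (fst w) * col_Y k (snd w)) = (\<lambda>(s, t). col_X k s * col_Y k t)"
  by (rule ext) (simp add: case_prod_beta)

lemma is_ell2_col_term: "is_ell2 (col_term k)"
  unfolding col_term_def by (rule is_ell2_scale) (simp add: col_term_tensor is_ell2_tensor(1)[OF col_X_le_trace_norm(1) col_Y_le_trace_norm(1)])

lemma ell2_norm_col_term: "ell2_norm (col_term k) = c * r k * (ell2_norm (col_X k) * ell2_norm (col_Y k))"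
proof -
  have "ell2_norm (col_term k) = cmod (complex_of_real (c * r k)) * ell2_norm (\<lambda>w. col_X k (fst w) * col_Y k (snd w))"
    unfolding col_term_def by (rule ell2_norm_scale)
  also have "ell2_norm (\<lambda>w. col_X k (fst w) * col_Y k (snd w)) = ell2_norm (col_X k) * ell2_norm (col_Y k)"
    unfolding col_term_tensor ell2_norm_eq_sqrt is_ell2_tensor(2)[OF col_X_le_trace_norm(1) col_Y_le_trace_norm(1)] by (simp add: real_sqrt_mult)
  also have "cmod (complex_of_real (c * r k)) = c * r k"
    by (simp only: norm_of_real) (use c expansion_terms(1)[of k] in simp)
  finally show ?thesis .
qed

lemma ell2_norm_col_term_le: "ell2_norm (col_term k) \<le> c * r k"
proof -
  have tX: "trace_norm (X k) \<ge> 0" using expansion_terms(3)[of k] by (simp add: trace_class_iff trace_norm_nonneg)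
  have "ell2_norm (col_X k) * ell2_norm (col_Y k) \<le> trace_norm (X k) * trace_norm (Y k)"
    by (rule mult_mono[OF col_X_le_trace_norm(2) col_Y_le_trace_norm(2)]) (use tX in \<open>auto simp: ell2_norm_nonneg\<close>)
  then have "ell2_norm (col_X k) * ell2_norm (col_Y k) \<le> 1" using expansion_terms(5) by simp
  then show ?thesis unfolding ell2_norm_col_term using c expansion_terms(1)[of k]
    by (simp add: mult_left_le)
qed

lemma scaled_coeff_summable_on: "(\<lambda>k. c * r k) summable_on UNIV"
proof -
  have "r summable_on UNIV" using summable_on_UNIV_nonneg_real_iff[of r] expansion_terms(1,2) by simp
  then show ?thesis by (rule summable_on_cmult_right)
qed

lemma col_term_norm_summable: "(\<lambda>k. ell2_norm (col_term k)) summable_on UNIV"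
  by (rule summable_on_comparison_test[OF scaled_coeff_summable_on]) (use ell2_norm_col_term_le in \<open>auto simp: ell2_norm_nonneg\<close>)

lemma is_ell2_scaled_col: "is_ell2 scaled_col"
  unfolding scaled_col_def by (rule is_ell2_scale) (rule column_le_trace_norm(1)[OF density_op_trace_class[OF d]])

lemma scaled_col_eq_infsum: "scaled_col = (\<lambda>w. \<Sum>\<^sub>\<infinity>k. col_term k w)"
proof (rule ell2_limit_eq_infsum[OF is_ell2_scaled_col is_ell2_col_term col_term_norm_summable])
  define R where "R n = (\<lambda>u v. D u v - cross_partial_sum r X Y n u v)" for n
  have eqn: "(\<lambda>w. scaled_col w - (\<Sum>k<n. col_term k w)) = (\<lambda>w. complex_of_real c * R n w (a, b))" for n
    by (rule ext) (simp add: scaled_col_def col_term_def R_def cross_partial_sum_def tensor_op_def col_X_def col_Y_def case_prod_beta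
        sum_distrib_left algebra_simps)
  have b: "ell2_norm (\<lambda>w. scaled_col w - (\<Sum>k<n. col_term k w)) \<le> c * trace_norm (R n)" if "n \<ge> N0" for n
  proof -
    have "ell2_norm (\<lambda>w. scaled_col w - (\<Sum>k<n. col_term k w)) = c * ell2_norm (\<lambda>w. R n w (a, b))"
      unfolding eqn ell2_norm_scale using c by simp
    also have "\<dots> \<le> c * trace_norm (R n)"
      using column_le_trace_norm(2)[OF N0[OF that]] c unfolding R_def by simp
    finally show ?thesis .
  qed
  have "(\<lambda>n. c * trace_norm (R n)) \<longlonglongrightarrow> c * 0"
    using e unfolding cross_expansion_def R_def by (intro tendsto_mult tendsto_const) simp
  then have l: "(\<lambda>n. c * trace_norm (R n)) \<longlonglongrightarrow> 0" by simp
  show "(\<lambda>n. ell2_norm (\<lambda>w. scaled_col w - (\<Sum>k<n. col_term k w))) \<longlonglongrightarrow> 0"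
  proof (rule Lim_null_comparison[OF _ l])
    show "\<forall>\<^sub>F n in sequentially. norm (ell2_norm (\<lambda>w. scaled_col w - (\<Sum>k<n. col_term k w))) \<le> c * trace_norm (R n)"
      unfolding eventually_sequentially
      by (intro exI[of _ N0] allI impI) (simp add: b ell2_norm_nonneg)
  qed
qed

definition col_term_norm :: "nat \<Rightarrow> real" where
  "col_term_norm k = ell2_norm (col_term k)"
definition pair_left :: "nat \<Rightarrow> 'a \<times> 'b \<Rightarrow> complex" where
  "pair_left m = col_term (fst (prod_decode m))"
definition pair_right :: "nat \<Rightarrow> 'a \<times> 'b \<Rightarrow> complex" where
  "pair_right m = col_term (snd (prod_decode m))"
definition pair_coeff :: "nat \<Rightarrow> real" where
  "pair_coeff m = col_term_norm (fst (prod_decode m)) * col_term_norm (snd (prod_decode m))"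
definition pair_X :: "nat \<Rightarrow> 'a \<Rightarrow> 'a \<Rightarrow> complex" where
  "pair_X m = normalized_rank_one (col_X (fst (prod_decode m))) (col_X (snd (prod_decode m))) a"
definition pair_Y :: "nat \<Rightarrow> 'b \<Rightarrow> 'b \<Rightarrow> complex" where
  "pair_Y m = normalized_rank_one (col_Y (fst (prod_decode m))) (col_Y (snd (prod_decode m))) b"

lemma col_term_norm_nonneg: "col_term_norm k \<ge> 0" by (simp add: col_term_norm_def ell2_norm_nonneg)

lemma pair_coeff_nonneg: "pair_coeff m \<ge> 0" by (simp add: pair_coeff_def col_term_norm_nonneg)

lemma pair_coeff_summable: "pair_coeff summable_on UNIV"
proof -
  have a: "(\<lambda>k. cmod (complex_of_real (col_term_norm k))) summable_on UNIV"
    using col_term_norm_summable by (simp add: col_term_norm_def ell2_norm_nonneg)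
  have "(\<lambda>p. complex_of_real (col_term_norm (fst p)) * complex_of_real (col_term_norm (snd p))) summable_on UNIV"
    by (rule infsum_mult_infsum(1)[OF a a])
  then have "(\<lambda>p. Re (complex_of_real (col_term_norm (fst p)) * complex_of_real (col_term_norm (snd p)))) summable_on UNIV"
    by (rule summable_on_Re)
  then have "(\<lambda>p. col_term_norm (fst p) * col_term_norm (snd p)) summable_on UNIV" by simp
  then show ?thesis unfolding pair_coeff_def
    using summable_on_reindex_bij_betw[OF bij_prod_decode, of "\<lambda>p. col_term_norm (fst p) * col_term_norm (snd p)"] by simp
qed

lemma pair_norm: "ell2_norm (pair_left m) * ell2_norm (pair_right m) = pair_coeff m"
  by (simp add: pair_left_def pair_right_def pair_coeff_def col_term_norm_def)

lemma is_ell2_pair_left: "is_ell2 (pair_left m)" and is_ell2_pair_right: "is_ell2 (pair_right m)"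
  by (simp_all add: pair_left_def pair_right_def is_ell2_col_term)

lemma col_term_abs_summable: "(\<lambda>k. cmod (col_term k x)) summable_on UNIV"
  by (rule summable_on_comparison_test[OF col_term_norm_summable]) (auto intro: cmod_le_ell2_norm is_ell2_col_term)

lemma scaled_col_proj_eq_infsum:
  shows "(\<lambda>m. pair_left m x * cnj (pair_right m y)) summable_on UNIV"
    and "scaled_col x * cnj (scaled_col y) = (\<Sum>\<^sub>\<infinity>m. pair_left m x * cnj (pair_right m y))"
proof -
  have a: "(\<lambda>k. cmod (col_term k x)) summable_on UNIV" by (rule col_term_abs_summable)
  have b: "(\<lambda>l. cmod (cnj (col_term l y))) summable_on UNIV" using col_term_abs_summable[of y] by simp
  have s: "(\<lambda>p. col_term (fst p) x * cnj (col_term (snd p) y)) summable_on UNIV" by (rule infsum_mult_infsum(1)[OF a b])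
  show "(\<lambda>m. pair_left m x * cnj (pair_right m y)) summable_on UNIV"
    unfolding pair_left_def pair_right_def
    using summable_on_reindex_bij_betw[OF bij_prod_decode, of "\<lambda>p. col_term (fst p) x * cnj (col_term (snd p) y)"] s
    by simp
  have "scaled_col x * cnj (scaled_col y) = (\<Sum>\<^sub>\<infinity>k. col_term k x) * (\<Sum>\<^sub>\<infinity>l. cnj (col_term l y))"
    by (subst (1 2) scaled_col_eq_infsum) (simp only: infsum_cnj)
  also have "\<dots> = (\<Sum>\<^sub>\<infinity>p. col_term (fst p) x * cnj (col_term (snd p) y))" by (rule infsum_mult_infsum(2)[OF a b])
  also have "\<dots> = (\<Sum>\<^sub>\<infinity>m. pair_left m x * cnj (pair_right m y))"
    unfolding pair_left_def pair_right_def
    using infsum_reindex_bij_betw[OF bij_prod_decode, of "\<lambda>p. col_term (fst p) x * cnj (col_term (snd p) y)"] by simp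
  finally show "scaled_col x * cnj (scaled_col y) = (\<Sum>\<^sub>\<infinity>m. pair_left m x * cnj (pair_right m y))" .
qed

lemma pair_term_eq: "complex_of_real (pair_coeff m) * tensor_op (pair_X m) (pair_Y m) u v = pair_left m u * cnj (pair_right m v)"
proof -
  obtain s t where u: "u = (s, t)" by fastforce
  obtain s' t' where v: "v = (s', t')" by fastforce
  define k where "k = fst (prod_decode m)"
  define l where "l = snd (prod_decode m)"
  have ne: "complex_of_real (ell2_norm (col_X k) * ell2_norm (col_Y k) * (ell2_norm (col_X l) * ell2_norm (col_Y l)))
      * (normalized_rank_one (col_X k) (col_X l) a s s' * normalized_rank_one (col_Y k) (col_Y l) b t t')
     = (col_X k s * col_Y k t) * cnj (col_X l s' * col_Y l t')"
    by (rule normalized_rank_one_tensor_entry[OF col_X_le_trace_norm(1) col_X_le_trace_norm(1) col_Y_le_trace_norm(1) col_Y_le_trace_norm(1)])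
  have coeff: "pair_coeff m = (c * r k * c * r l) * (ell2_norm (col_X k) * ell2_norm (col_Y k) * (ell2_norm (col_X l) * ell2_norm (col_Y l)))"
    by (simp add: pair_coeff_def col_term_norm_def ell2_norm_col_term k_def l_def algebra_simps)
  have "complex_of_real (pair_coeff m) * tensor_op (pair_X m) (pair_Y m) u v
      = complex_of_real (c * r k * c * r l) * (complex_of_real (ell2_norm (col_X k) * ell2_norm (col_Y k) * (ell2_norm (col_X l) * ell2_norm (col_Y l)))
      * (normalized_rank_one (col_X k) (col_X l) a s s' * normalized_rank_one (col_Y k) (col_Y l) b t t'))"
    unfolding coeff u v by (simp add: tensor_op_def pair_X_def pair_Y_def k_def l_def algebra_simps)
  also have "\<dots> = complex_of_real (c * r k * c * r l) * ((col_X k s * col_Y k t) * cnj (col_X l s' * col_Y l t'))"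
    unfolding ne ..
  also have "\<dots> = pair_left m u * cnj (pair_right m v)"
    by (simp add: pair_left_def pair_right_def col_term_def u v k_def l_def algebra_simps)
  finally show ?thesis .
qed

lemma pair_X_trace_norm: "trace_class (pair_X m)" "trace_norm (pair_X m) = 1"
  unfolding pair_X_def using normalized_rank_one_trace_norm[OF col_X_le_trace_norm(1) col_X_le_trace_norm(1)] by auto

lemma pair_Y_trace_norm: "trace_class (pair_Y m)" "trace_norm (pair_Y m) = 1"
  unfolding pair_Y_def using normalized_rank_one_trace_norm[OF col_Y_le_trace_norm(1) col_Y_le_trace_norm(1)] by auto

lemma scaled_col_proj_remainder:
  "(\<lambda>u v. scaled_col u * cnj (scaled_col v) - cross_partial_sum pair_coeff pair_X pair_Y n u v) = (\<lambda>u v. \<Sum>\<^sub>\<infinity>m\<in>{n..}. pair_left m u * cnj (pair_right m v))"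
proof (intro ext)
  fix u v
  have U: "UNIV = {..<n} \<union> {n..}" by auto
  have "scaled_col u * cnj (scaled_col v) = (\<Sum>\<^sub>\<infinity>m\<in>{..<n} \<union> {n..}. pair_left m u * cnj (pair_right m v))"
    using scaled_col_proj_eq_infsum(2) U by metis
  also have "\<dots> = (\<Sum>\<^sub>\<infinity>m\<in>{..<n}. pair_left m u * cnj (pair_right m v)) + (\<Sum>\<^sub>\<infinity>m\<in>{n..}. pair_left m u * cnj (pair_right m v))"
    by (rule infsum_Un_disjoint) (auto intro: summable_on_subset[OF scaled_col_proj_eq_infsum(1)])
  also have "(\<Sum>\<^sub>\<infinity>m\<in>{..<n}. pair_left m u * cnj (pair_right m v)) = cross_partial_sum pair_coeff pair_X pair_Y n u v"
    by (simp add: cross_partial_sum_def pair_term_eq)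
  finally show "scaled_col u * cnj (scaled_col v) - cross_partial_sum pair_coeff pair_X pair_Y n u v = (\<Sum>\<^sub>\<infinity>m\<in>{n..}. pair_left m u * cnj (pair_right m v))"
    by simp
qed

lemma trace_class_scaled_col_proj_remainder: "trace_class (\<lambda>u v. scaled_col u * cnj (scaled_col v) - cross_partial_sum pair_coeff pair_X pair_Y n u v)"
  and trace_norm_scaled_col_proj_remainder_le: "trace_norm (\<lambda>u v. scaled_col u * cnj (scaled_col v) - cross_partial_sum pair_coeff pair_X pair_Y n u v) \<le> (\<Sum>\<^sub>\<infinity>m\<in>{n..}. pair_coeff m)"
proof -
  have s: "(\<lambda>m. ell2_norm (pair_left m) * ell2_norm (pair_right m)) summable_on {n..}"
    unfolding pair_norm by (rule summable_on_subset[OF pair_coeff_summable]) simp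
  show "trace_class (\<lambda>u v. scaled_col u * cnj (scaled_col v) - cross_partial_sum pair_coeff pair_X pair_Y n u v)"
    unfolding scaled_col_proj_remainder by (rule trace_class_nuclear(1)[OF is_ell2_pair_left is_ell2_pair_right s])
  show "trace_norm (\<lambda>u v. scaled_col u * cnj (scaled_col v) - cross_partial_sum pair_coeff pair_X pair_Y n u v) \<le> (\<Sum>\<^sub>\<infinity>m\<in>{n..}. pair_coeff m)"
    unfolding scaled_col_proj_remainder using trace_class_nuclear(2)[OF is_ell2_pair_left is_ell2_pair_right s] by (simp add: pair_norm)
qed

lemma cross_expansion_scaled_col_proj: "cross_expansion (\<lambda>u v. scaled_col u * cnj (scaled_col v)) pair_coeff pair_X pair_Y"
  unfolding cross_expansion_def
proof (intro conjI allI)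
  show "pair_coeff k \<ge> 0" for k by (rule pair_coeff_nonneg)
  show "summable pair_coeff" using summable_on_UNIV_nonneg_real_iff[of pair_coeff] pair_coeff_nonneg pair_coeff_summable by simp
  show "trace_class (pair_X k)" "trace_class (pair_Y k)" "trace_norm (pair_X k) * trace_norm (pair_Y k) = 1" for k
    using pair_X_trace_norm pair_Y_trace_norm by (auto intro:)
  show "(\<lambda>n. trace_norm (\<lambda>u v. scaled_col u * cnj (scaled_col v) - cross_partial_sum pair_coeff pair_X pair_Y n u v)) \<longlonglongrightarrow> 0"
  proof (rule tendsto_sandwich[OF _ _ tendsto_const infsum_tail_tendsto_0[OF pair_coeff_summable]])
    show "\<forall>\<^sub>F n in sequentially. 0 \<le> trace_norm (\<lambda>u v. scaled_col u * cnj (scaled_col v) - cross_partial_sum pair_coeff pair_X pair_Y n u v)"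
      using trace_class_scaled_col_proj_remainder by (simp add: trace_class_iff trace_norm_nonneg)
    show "\<forall>\<^sub>F n in sequentially. trace_norm (\<lambda>u v. scaled_col u * cnj (scaled_col v) - cross_partial_sum pair_coeff pair_X pair_Y n u v) \<le> (\<Sum>\<^sub>\<infinity>m\<in>{n..}. pair_coeff m)"
      using trace_norm_scaled_col_proj_remainder_le by simp
  qed
qed

end

definition interleave :: "(nat \<Rightarrow> 'a) \<Rightarrow> (nat \<Rightarrow> 'a) \<Rightarrow> nat \<Rightarrow> 'a" where
  "interleave f g m = (if even m then f (m div 2) else g (m div 2))"

lemma sum_interleave:
  fixes f g :: "nat \<Rightarrow> 'a::comm_monoid_add"
  shows "(\<Sum>m<2 * k. interleave f g m) = (\<Sum>j<k. f j) + (\<Sum>j<k. g j)"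
proof (induction k)
  case (Suc k)
  have "{..<2 * Suc k} = insert (2 * k + 1) (insert (2 * k) {..<2 * k})" by auto
  then show ?case using Suc by (simp add: interleave_def add_ac)
qed simp

lemma summable_interleave:
  fixes f g :: "nat \<Rightarrow> real"
  assumes "\<And>k. f k \<ge> 0" "\<And>k. g k \<ge> 0" "summable f" "summable g"
  shows "summable (interleave f g)"
proof (rule summableI_nonneg_bounded)
  show "interleave f g m \<ge> 0" for m using assms by (simp add: interleave_def)
  fix M
  have "(\<Sum>m<M. interleave f g m) \<le> (\<Sum>m<2 * M. interleave f g m)"
    by (rule sum_mono2) (use assms in \<open>auto simp: interleave_def\<close>)
  also have "\<dots> = (\<Sum>j<M. f j) + (\<Sum>j<M. g j)" by (rule sum_interleave)
  also have "\<dots> \<le> suminf f + suminf g"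
    using assms by (intro add_mono sum_le_suminf) auto
  finally show "(\<Sum>m<M. interleave f g m) \<le> suminf f + suminf g" .
qed

lemma filterlim_div2_sequentially: "filterlim (\<lambda>m::nat. (m + j) div 2) sequentially sequentially"
  unfolding filterlim_at_top eventually_sequentially
proof
  fix Z :: nat show "\<exists>N. \<forall>n\<ge>N. Z \<le> (n + j) div 2" by (rule exI[of _ "2 * Z"]) auto
qed

lemma cross_partial_sum_interleave:
  "cross_partial_sum (interleave r s) (interleave X X') (interleave Y Y') m
    = (\<lambda>u v. cross_partial_sum r X Y ((m + 1) div 2) u v + cross_partial_sum s X' Y' (m div 2) u v)"
proof (induction m)
  case (Suc m)
  show ?case
  proof (cases "even m")
    case True
    then have "(Suc m + 1) div 2 = Suc ((m + 1) div 2)" "Suc m div 2 = m div 2" "(m + 1) div 2 = m div 2"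
      by auto
    then show ?thesis using Suc.IH True
      by (simp add: cross_partial_sum_Suc interleave_def fun_eq_iff algebra_simps)
  next
    case False
    then have "(Suc m + 1) div 2 = (m + 1) div 2" "Suc m div 2 = Suc (m div 2)" by auto
    then show ?thesis using Suc.IH False
      by (simp add: cross_partial_sum_Suc interleave_def fun_eq_iff algebra_simps)
  qed
qed (simp add: cross_partial_sum_0)

lemma cross_partial_sum_scale:
  "cross_partial_sum (\<lambda>k. c * r k) X Y n = (\<lambda>u v. complex_of_real c * cross_partial_sum r X Y n u v)"
  by (simp add: cross_partial_sum_def sum_distrib_left mult_ac fun_eq_iff)

lemma cross_partial_sum_uminus:
  "cross_partial_sum r (\<lambda>k s s'. - X k s s') Y n = (\<lambda>u v. - cross_partial_sum r X Y n u v)"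
  by (simp add: cross_partial_sum_def tensor_op_uminus_left sum_negf fun_eq_iff)

lemma trace_norm_scale_lincomb_le:
  assumes "trace_class A" "trace_class B"
  shows "trace_norm (\<lambda>x y. a * (A x y + b * B x y)) \<le> cmod a * (trace_norm A + cmod b * trace_norm B)"
  using trace_norm_scale[OF trace_class_lincomb(1)[OF assms], of a] trace_class_lincomb(2)[OF assms, of b]
  by (simp add: mult_left_mono)

lemma tendsto_trace_norm_lincomb_halves:
  assumes A: "(\<lambda>n. trace_norm (A n)) \<longlonglongrightarrow> 0" "\<And>n. n \<ge> N0 \<Longrightarrow> trace_class (A n)"
    and B: "(\<lambda>n. trace_norm (B n)) \<longlonglongrightarrow> 0" "\<And>n. trace_class (B n)"
  shows "(\<lambda>m. trace_norm (\<lambda>u v. a * (A ((m + 1) div 2) u v + b * B (m div 2) u v))) \<longlonglongrightarrow> 0"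
proof -
  define g where "g m = cmod a * (trace_norm (A ((m + 1) div 2)) + cmod b * trace_norm (B (m div 2)))" for m
  have bound: "0 \<le> trace_norm (\<lambda>u v. a * (A ((m + 1) div 2) u v + b * B (m div 2) u v))
      \<and> trace_norm (\<lambda>u v. a * (A ((m + 1) div 2) u v + b * B (m div 2) u v)) \<le> g m"
    if "m \<ge> 2 * N0" for m
  proof
    have t1: "trace_class (A ((m + 1) div 2))" by (rule A(2)) (use that in auto)
    have "trace_class (\<lambda>u v. a * (A ((m + 1) div 2) u v + b * B (m div 2) u v))"
      by (rule trace_class_scale(1)[OF trace_class_lincomb(1)[OF t1 B(2)]])
    then show "0 \<le> trace_norm (\<lambda>u v. a * (A ((m + 1) div 2) u v + b * B (m div 2) u v))"
      by (simp add: trace_class_iff trace_norm_nonneg)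
    show "trace_norm (\<lambda>u v. a * (A ((m + 1) div 2) u v + b * B (m div 2) u v)) \<le> g m"
      unfolding g_def by (rule trace_norm_scale_lincomb_le[OF t1 B(2)])
  qed
  have "g \<longlonglongrightarrow> cmod a * (0 + cmod b * 0)"
    unfolding g_def
    by (intro tendsto_mult tendsto_add tendsto_const filterlim_compose[OF A(1) filterlim_div2_sequentially]
        filterlim_compose[OF B(1) filterlim_div2_sequentially[where j=0, simplified]])
  then have g0: "g \<longlonglongrightarrow> 0" by simp
  show ?thesis
  proof (rule tendsto_sandwich[OF _ _ tendsto_const g0])
    show "\<forall>\<^sub>F m in sequentially. 0 \<le> trace_norm (\<lambda>u v. a * (A ((m + 1) div 2) u v + b * B (m div 2) u v))"
      unfolding eventually_sequentially using bound by blast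
    show "\<forall>\<^sub>F m in sequentially. trace_norm (\<lambda>u v. a * (A ((m + 1) div 2) u v + b * B (m div 2) u v)) \<le> g m"
      unfolding eventually_sequentially using bound by blast
  qed
qed

text \<open>The sign of \<open>-\<lambda> P\<close> goes into the first tensor factor, as the coefficients of an expansion
  must be nonnegative.\<close>

lemma interleave_cross_expansion:
  fixes D P :: "'a \<times> 'b \<Rightarrow> 'a \<times> 'b \<Rightarrow> complex" and lam :: real
  assumes eD: "cross_expansion D r X Y"
    and N0: "\<And>n. n \<ge> N0 \<Longrightarrow> trace_class (\<lambda>u v. D u v - cross_partial_sum r X Y n u v)"
    and eP: "cross_expansion P r' X' Y'"
    and tP: "\<And>n. trace_class (\<lambda>u v. P u v - cross_partial_sum r' X' Y' n u v)"
    and lam: "0 \<le> lam" "lam < 1"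
  shows "cross_expansion (\<lambda>u v. complex_of_real (1 / (1 - lam)) * (D u v + complex_of_real (- lam) * P u v))
           (interleave (\<lambda>k. (1 / (1 - lam)) * r k) (\<lambda>k. (lam / (1 - lam)) * r' k))
           (interleave X (\<lambda>k s s'. - X' k s s')) (interleave Y Y')"
  unfolding cross_expansion_def
proof (intro conjI allI)
  have r: "\<And>k. r k \<ge> 0" "summable r" and r': "\<And>k. r' k \<ge> 0" "summable r'"
    using eD eP by (auto simp: cross_expansion_def)
  show "interleave (\<lambda>k. (1 / (1 - lam)) * r k) (\<lambda>k. (lam / (1 - lam)) * r' k) k \<ge> 0" for k
    using r r' lam by (simp add: interleave_def)
  show "summable (interleave (\<lambda>k. (1 / (1 - lam)) * r k) (\<lambda>k. (lam / (1 - lam)) * r' k))"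
    using r r' lam by (intro summable_interleave summable_mult) auto
  have tX: "trace_class (X k)" "trace_class (Y k)" "trace_norm (X k) * trace_norm (Y k) = 1" for k
    using eD by (auto simp: cross_expansion_def)
  have tX': "trace_class (X' k)" "trace_class (Y' k)" "trace_norm (X' k) * trace_norm (Y' k) = 1" for k
    using eP by (auto simp: cross_expansion_def)
  have neg: "trace_class (\<lambda>s s'. - X' j s s')" "trace_norm (\<lambda>s s'. - X' j s s') = trace_norm (X' j)" for j
    using trace_class_scale(1)[OF tX'(1), of "-1"] trace_norm_scale[OF tX'(1), of "-1"] by simp_all
  show "trace_class (interleave X (\<lambda>k s s'. - X' k s s') k)" "trace_class (interleave Y Y' k)"
    "trace_norm (interleave X (\<lambda>k s s'. - X' k s s') k) * trace_norm (interleave Y Y' k) = 1" for k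
    using tX tX' neg by (simp_all add: interleave_def)
  define R where "R n = (\<lambda>u v. D u v - cross_partial_sum r X Y n u v)" for n
  define R' where "R' n = (\<lambda>u v. P u v - cross_partial_sum r' X' Y' n u v)" for n
  have rem: "(\<lambda>u v. complex_of_real (1 / (1 - lam)) * (D u v + complex_of_real (- lam) * P u v)
      - cross_partial_sum (interleave (\<lambda>k. (1 / (1 - lam)) * r k) (\<lambda>k. (lam / (1 - lam)) * r' k))
          (interleave X (\<lambda>k s s'. - X' k s s')) (interleave Y Y') m u v)
    = (\<lambda>u v. complex_of_real (1 / (1 - lam)) * (R ((m + 1) div 2) u v + complex_of_real (- lam) * R' (m div 2) u v))" for m
  proof -
    have "complex_of_real (lam / (1 - lam)) = complex_of_real (1 / (1 - lam)) * complex_of_real lam"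
      by (simp flip: of_real_mult)
    then show ?thesis
      unfolding cross_partial_sum_interleave cross_partial_sum_scale cross_partial_sum_uminus
      by (simp add: fun_eq_iff R_def R'_def algebra_simps)
  qed
  show "(\<lambda>m. trace_norm (\<lambda>u v. complex_of_real (1 / (1 - lam)) * (D u v + complex_of_real (- lam) * P u v)
      - cross_partial_sum (interleave (\<lambda>k. (1 / (1 - lam)) * r k) (\<lambda>k. (lam / (1 - lam)) * r' k))
          (interleave X (\<lambda>k s s'. - X' k s s')) (interleave Y Y') m u v)) \<longlonglongrightarrow> 0"
    unfolding rem R_def R'_def
    by (rule tendsto_trace_norm_lincomb_halves[OF _ N0 _ tP]) (use eD eP in \<open>simp_all add: cross_expansion_def\<close>)
qed

section \<open>Extreme cross states\<close>

lemma cross_states_density_op: "D \<in> cross_states \<Longrightarrow> density_op D"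
  by (simp add: cross_states_iff)

lemma rank_one_proj_extreme:
  fixes D :: "'a \<times> 'b \<Rightarrow> 'a \<times> 'b \<Rightarrow> complex"
  assumes "D \<in> rank_one_projs" "D \<in> cross_states"
  shows "D \<in> ext_points cross_states"
proof -
  obtain \<psi> where psi: "is_ell2 \<psi>" "ell2_norm \<psi> = 1" and D: "D = (\<lambda>x y. \<psi> x * cnj (\<psi> y))"
    using assms(1) unfolding rank_one_projs_def by blast
  have n1: "ell2_sqnorm \<psi> = 1" using psi(2) ell2_sqnorm_nonneg[of \<psi>] by (simp add: ell2_norm_eq_sqrt)
  show ?thesis unfolding ext_points_def
  proof (intro CollectI conjI ballI allI impI)
    show "D \<in> cross_states" by (rule assms(2))
    fix D1 D2 t
    assume D1: "D1 \<in> cross_states" and D2: "D2 \<in> cross_states"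
      and h: "0 < t \<and> t < 1 \<and> D = (\<lambda>x y. complex_of_real t * D1 x y + complex_of_real (1 - t) * D2 x y)"
    have d1: "density_op D1" and d2: "density_op D2" using D1 D2 by (auto intro: cross_states_density_op)
    have eq1: "(\<lambda>x y. \<psi> x * cnj (\<psi> y)) = (\<lambda>x y. complex_of_real t * D1 x y + complex_of_real (1 - t) * D2 x y)"
      using h D by simp
    have eq2: "(\<lambda>x y. \<psi> x * cnj (\<psi> y)) = (\<lambda>x y. complex_of_real (1 - t) * D2 x y + complex_of_real (1 - (1 - t)) * D1 x y)"
      unfolding eq1 by (intro ext) (simp add: algebra_simps)
    show "D1 = D" unfolding D using h by (intro rank_one_proj_convex_split[OF d1 d2 _ _ psi(1) n1 eq1]) auto
    show "D2 = D" unfolding D using h by (intro rank_one_proj_convex_split[OF d2 d1 _ _ psi(1) n1 eq2]) auto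
  qed
qed

lemma convex_combination_solve:
  assumes lam: "lam < 1"
    and D: "D = (\<lambda>x y. complex_of_real lam * P x y + complex_of_real (1 - lam) * D2 x y)"
  shows "D2 = (\<lambda>u v. complex_of_real (1 / (1 - lam)) * (D u v + complex_of_real (- lam) * P u v))"
proof (intro ext)
  fix u v
  have "D u v + complex_of_real (- lam) * P u v = complex_of_real (1 - lam) * D2 u v"
    by (subst D) (simp add: algebra_simps)
  moreover have "complex_of_real (1 / (1 - lam)) * complex_of_real (1 - lam) = 1"
    using lam by (simp del: of_real_divide of_real_diff flip: of_real_mult)
  ultimately show "D2 u v = complex_of_real (1 / (1 - lam)) * (D u v + complex_of_real (- lam) * P u v)"
    by (metis mult.assoc mult_1)
qed

lemma cross_states_convex_split:
  fixes D :: "'a \<times> 'b \<Rightarrow> 'a \<times> 'b \<Rightarrow> complex"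
  assumes Dc: "D \<in> cross_states" and c: "c > 0" and lam: "0 < lam" "lam < 1"
    and P: "P = (\<lambda>x y. (complex_of_real c * D x z) * cnj (complex_of_real c * D y z))"
    and dP: "density_op P" and dD2: "density_op D2"
    and Deq: "D = (\<lambda>x y. complex_of_real lam * P x y + complex_of_real (1 - lam) * D2 x y)"
  shows "P \<in> cross_states" and "D2 \<in> cross_states"
proof -
  have d: "density_op D" by (rule cross_states_density_op[OF Dc])
  have "P \<in> cross_states \<and> D2 \<in> cross_states"
  proof (cases "Sup (UNIV :: real set) = 0 \<and> (\<exists>(X0::'a \<Rightarrow> 'a \<Rightarrow> complex) (Y0::'b \<Rightarrow> 'b \<Rightarrow> complex).
      trace_class X0 \<and> trace_class Y0 \<and> \<not> trace_class (tensor_op X0 Y0))")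
    case True
    then obtain X0 :: "'a \<Rightarrow> 'a \<Rightarrow> complex" and Y0 :: "'b \<Rightarrow> 'b \<Rightarrow> complex"
      where "Sup (UNIV :: real set) = 0" "trace_class X0" "trace_class Y0" "\<not> trace_class (tensor_op X0 Y0)"
      by blast
    from density_op_cross_if_tensor_not_trace_class[OF this] dP dD2 show ?thesis by blast
  next
    case False
    then have h: "Sup (UNIV :: real set) \<noteq> 0 \<or> (\<forall>(X::'a \<Rightarrow> 'a \<Rightarrow> complex) (Y::'b \<Rightarrow> 'b \<Rightarrow> complex).
        trace_class X \<longrightarrow> trace_class Y \<longrightarrow> trace_class (tensor_op X Y))"
      by auto
    obtain r X Y where e: "cross_expansion D r X Y" using Dc by (auto simp: cross_states_iff)
    obtain N0 where N0: "\<And>n. n \<ge> N0 \<Longrightarrow> trace_class (\<lambda>u v. D u v - cross_partial_sum r X Y n u v)"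
      using cross_remainder_eventually_trace_class[OF e d h] by blast
    obtain a b where z: "z = (a, b)" by fastforce
    have Pe: "P = (\<lambda>u v. scaled_col D a b c u * cnj (scaled_col D a b c v))"
      unfolding P z by (simp add: scaled_col_def[OF d e N0 c])
    have eP: "cross_expansion P (pair_coeff r X Y a b c) (pair_X X a) (pair_Y Y b)"
      unfolding Pe by (rule cross_expansion_scaled_col_proj[OF d e N0 c])
    have tP: "trace_class (\<lambda>u v. P u v - cross_partial_sum (pair_coeff r X Y a b c) (pair_X X a) (pair_Y Y b) n u v)"
      for n unfolding Pe by (rule trace_class_scaled_col_proj_remainder[OF d e N0 c])
    have "D2 = (\<lambda>u v. complex_of_real (1 / (1 - lam)) * (D u v + complex_of_real (- lam) * P u v))"
      by (rule convex_combination_solve[OF lam(2) Deq])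
    then have "\<exists>r X Y. cross_expansion D2 r X Y"
      using interleave_cross_expansion[OF e N0 eP tP less_imp_le[OF lam(1)] lam(2)] by blast
    then have "D2 \<in> cross_states" using dD2 cross_states_iff by blast
    moreover have "P \<in> cross_states" using eP dP cross_states_iff by blast
    ultimately show ?thesis by blast
  qed
  then show "P \<in> cross_states" and "D2 \<in> cross_states" by blast+
qed

lemma extreme_rank_one_proj:
  fixes D :: "'a \<times> 'b \<Rightarrow> 'a \<times> 'b \<Rightarrow> complex"
  assumes ext: "D \<in> ext_points cross_states"
  shows "D \<in> rank_one_projs"
proof (rule ccontr)
  assume not_pure: "D \<notin> rank_one_projs"
  have Dc: "D \<in> cross_states" using ext unfolding ext_points_def by blast
  have extr: "\<And>D1 D2 t. D1 \<in> cross_states \<Longrightarrow> D2 \<in> cross_states \<Longrightarrow> 0 < t \<Longrightarrow> t < 1 \<Longrightarrow>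
      D = (\<lambda>x y. complex_of_real t * D1 x y + complex_of_real (1 - t) * D2 x y) \<Longrightarrow> D1 = D"
    using ext unfolding ext_points_def by blast
  obtain z c lam D2 where c: "c > 0" and lam: "0 < lam" "lam < 1" and dD2: "density_op D2"
    and u: "is_ell2 (\<lambda>x. complex_of_real c * D x z)" "ell2_sqnorm (\<lambda>x. complex_of_real c * D x z) = 1"
    and Deq: "D = (\<lambda>x y. complex_of_real lam * ((complex_of_real c * D x z) * cnj (complex_of_real c * D y z))
                   + complex_of_real (1 - lam) * D2 x y)"
    by (rule density_op_split_rank_one[OF cross_states_density_op[OF Dc] not_pure])
  define P where "P = (\<lambda>x y. (complex_of_real c * D x z) * cnj (complex_of_real c * D y z))"
  have dP: "density_op P" unfolding P_def by (rule density_op_rank_one[OF u])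
  have Deq': "D = (\<lambda>x y. complex_of_real lam * P x y + complex_of_real (1 - lam) * D2 x y)"
    unfolding P_def by (rule Deq)
  have "P \<in> cross_states" "D2 \<in> cross_states"
    by (rule cross_states_convex_split[OF Dc c lam P_def dP dD2 Deq'])+
  then have "P = D" by (rule extr[OF _ _ lam Deq'])
  moreover have "P \<in> rank_one_projs"
    unfolding rank_one_projs_def P_def using u by (auto simp: ell2_norm_eq_sqrt)
  ultimately show False using not_pure by simp
qed

theorem corollary6p16:
  shows "ext_points (cross_states :: ('a::countable \<times> 'b::countable \<Rightarrow> 'a \<times> 'b \<Rightarrow> complex) set)
           = rank_one_projs \<inter> cross_states"
proof
  show "ext_points (cross_states :: ('a::countable \<times> 'b::countable \<Rightarrow> 'a \<times> 'b \<Rightarrow> complex) set)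
           \<subseteq> rank_one_projs \<inter> cross_states"
    using extreme_rank_one_proj by (auto simp: ext_points_def)
  show "rank_one_projs \<inter> cross_states
           \<subseteq> ext_points (cross_states :: ('a::countable \<times> 'b::countable \<Rightarrow> 'a \<times> 'b \<Rightarrow> complex) set)"
    using rank_one_proj_extreme by blast
qed

end
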